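(* Under the setting, assumptions and notation in the context, assume in addition that the parameter $\tau$ equals $\theta/2$ and that $\Gamma\ge\hat\Gamma_3$. Then there exist scalars $M>0$ and $B_F>0$ such that, with $$\Theta:=\max\Big\{1,\ \sigma_{R}\hat\gamma L_0\|v\|_{R},\ c_0L_0\big(\hat\gamma\|R\|_2\|v\|_2L_0+\sqrt{m}\,\Lambda_0+\mu_f c_0B_F/M\big)\Big\}\cdot\frac{\sqrt3\,M}{\mu_f},\qquad \mathscr{B}:=\max\Big\{(\Gamma+1)^{1-a-b}\|\Delta_1\|_2,\ \frac{4\Theta}{\mu_f\lambda\hat\gamma\theta}\Big\},$$ the iterates of the algorithm satisfy: (i) for every $k\ge1$, $\|\mathbf{x}_{k+1}-\mathbf{1}\bar x_{k+1}\|_{R}\le \dfrac{\mathscr{B}}{(k+\Gamma-1)^{1-a-b}}$; (ii) for every $k\ge1$, $\|\mathbf{y}_{k+1}-v\bar y_{k+1}\|_{C}\le \dfrac{\mathscr{B}}{(k+\Gamma-1)^{1-a-b}}$; (iii) $\lim_{k\to\infty}\bar x_k=x^*$.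
   Context: Problem data. Let $m,n\ge1$, $[m]=\{1,\dots,m\}$. For $i\in[m]$ let $f_i:\mathbb{R}^n\to\mathbb{R}$ be continuously differentiable and $F_i:\mathbb{R}^n\to\mathbb{R}^n$. Put $f=\sum_i f_i$, $F=\sum_iF_i$. Assume: $f$ is $\mu_f$-strongly convex ($\mu_f>0$); each $\nabla f_i$ is $L_f$-Lipschitz; $F$ is monotone ($(F(x)-F(y))^\top(x-y)\ge0$); each $F_i$ is $L_F$-Lipschitz ($L_f,L_F>0$). Let $\mathrm{SOL}(\mathbb{R}^n,F)=\{x: F(x)^\top(y-x)\ge0\ \forall y\in\mathbb{R}^n\}$, assumed nonempty, and let $x^*$ be the unique minimizer of $f$ over $\mathrm{SOL}(\mathbb{R}^n,F)$. For $\lambda>0$, $x^*_\lambda$ denotes the unique $x$ with $F(x)+\lambda\nabla f(x)=0$. Points of $\mathbb{R}^n$ are row vectors; $\mathbf{1}\in\mathbb{R}^m$ is the all-ones column vector; $\|\cdot\|_2$ is the Euclidean norm (Frobenius for non-square matrices, spectral norm for $m\times m$ matrices). Communication matrices. $R,C\in\mathbb{R}^{m\times m}$ are nonnegative with strictly positive diagonals, $R\mathbf{1}=\mathbf{1}$, $\mathbf{1}^\top C=\mathbf{1}^\top$. For nonnegative $B$, $\mathcal{G}_B$ is the digraph on $[m]$ with edge $(j,i)$ iff $B_{ij}>0$, and $\mathcal{R}_B$ is the set of vertices that are roots of some spanning tree of $\mathcal{G}_B$; assume $\mathcal{R}_R\cap\mathcal{R}_{C^\top}\neq\emptyset$. Let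 $u\ge0$ be the unique vector with $u^\top R=u^\top$, $u^\top\mathbf{1}=m$, and $v\ge0$ the unique vector with $Cv=v$, $\mathbf{1}^\top v=m$. Algorithm (IR-Push-Pull). With stepsizes $\gamma_{i,k}\ge0$ and $\lambda_k>0$: $x_{i,0}\in\mathbb{R}^n$ arbitrary, $y_{i,0}=F_i(x_{i,0})+\lambda_0\nabla f_i(x_{i,0})$, and for $k\ge0$: $x_{i,k+1}=\sum_jR_{ij}(x_{j,k}-\gamma_{j,k}y_{j,k})$, $y_{i,k+1}=\sum_jC_{ij}y_{j,k}+F_i(x_{i,k+1})+\lambda_{k+1}\nabla f_i(x_{i,k+1})-F_i(x_{i,k})-\lambda_k\nabla f_i(x_{i,k})$. $\mathbf{x}_k,\mathbf{y}_k\in\mathbb{R}^{m\times n}$ have rows $x_{i,k},y_{i,k}$; $\boldsymbol\gamma_k=\mathrm{diag}(\gamma_{1,k},\dots,\gamma_{m,k})$; $\bar x_k=\frac1m u^\top\mathbf{x}_k$, $\bar y_k=\frac1m\mathbf{1}^\top\mathbf{y}_k$. Parameters. $\hat\gamma_k:=\max_j\gamma_{j,k}=\hat\gamma/(k+\Gamma)^a$, $\lambda_k=\lambda/(k+\Gamma)^b$, with $\hat\gamma,\lambda,\Gamma,a,b>0$, $a>b$, $a+b<1$, $2a+3b<2$, $\Gamma\ge1$, $\Gamma\ge(4/(\hat\gamma\lambda\mu_f\tau))^{1/(1-a-b)}$ for a constant $\tau>0$; and $\alpha_k:=\frac1m u^\top\boldsymbol\gamma_kv\ge\theta\hat\gamma_k$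 for all $k\ge0$, for some $\theta>0$. $L_k:=L_F+\lambda_kL_f$, $\Lambda_k:=|1-\lambda_{k+1}/\lambda_k|$. Norms. For a vector norm $\|\cdot\|$ on $\mathbb{R}^m$, extend it to $W\in\mathbb{R}^{m\times p}$ by $\|W\|=\|(\|W_{\bullet1}\|,\dots,\|W_{\bullet p}\|)\|_2$ (columns $W_{\bullet j}$), and to square $m\times m$ matrices as the induced operator norm. Let $\|\cdot\|_R,\|\cdot\|_C$ be vector norms on $\mathbb{R}^m$ (so extended) with $\sigma_R:=\|R-\frac1m\mathbf{1}u^\top\|_R<1$, $\sigma_C:=\|C-\frac1m v\mathbf{1}^\top\|_C<1$, and $\|W\|_2\le\|W\|_R$, $\|W\|_2\le\|W\|_C$ for all $W$; let $\delta_{R,C},\delta_{C,2}>0$ satisfy $\|W\|_R\le\delta_{R,C}\|W\|_C$, $\|W\|_C\le\delta_{C,2}\|W\|_2$ for all $W$. $c_0:=\delta_{C,2}\|I-\frac1m v\mathbf{1}^\top\|_C$. Error vector. For $k\ge1$, $\Delta_k:=\big(\|\bar x_k-x^*_{\lambda_{k-1}}\|_2,\ \|\mathbf{x}_k-\mathbf{1}\bar x_k\|_R,\ \|\mathbf{y}_k-v\bar y_k\|_C\big)^\top$. Constants. $\bar\theta:=u^\top v/m$. $\hat\Gamma_2:=\max\{(L_0\hat\gamma u^\top v/m)^{1/a},\ (\hat\gamma u^\top vL_0^2/(m\mu_f\lambda))^{1/(a-b)}\}$. $c_1:=(0.5\mu_f\bar\theta\lambda)\sigma_R\delta_{R,C}c_0L_0\|R\|_2\|v\|_2\frac{L_0}{\sqrt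 m}+\frac{\bar\theta L_0}{\sqrt m}\sigma_R\delta_{R,C}c_0L_0\|R\|_2\|v\|_2L_0+\frac{\|u\|_2}{m}\sigma_RL_0\|v\|_R\,c_0L_0\|R\|_2\|v\|_2\frac{L_0}{\sqrt m}$; $c_2:=(0.5\mu_f\bar\theta\lambda)\sigma_R\delta_{R,C}c_0L_0(\|R-I\|_2+2\Lambda_0)+\frac{1-\sigma_C}{2}\frac{\bar\theta L_0}{\sqrt m}\sigma_RL_0\|v\|_R+\frac{\bar\theta L_0}{\sqrt m}\sigma_R\delta_{R,C}c_0L_0\,2\sqrt m\Lambda_0+\frac{\|u\|_2}{m}\sigma_RL_0\|v\|_R\,c_0L_0(\|R-I\|_2+2\Lambda_0)+\frac{1-\sigma_R}{2}c_0L_0\|R\|_2\|v\|_2L_0\frac{\|u\|_2}{m}$; $c_3:=\frac18\mu_f\theta(1-\sigma_R)(1-\sigma_C)$; $c_4:=\frac{1-\sigma_R}{2}c_0L_0\sqrt m\frac{\|u\|_2}{m}$. $\hat\Gamma_3:=\max\Big\{\hat\Gamma_2,\ \Big(\frac{\mu_f\lambda\hat\gamma u^\top v+2\hat\gamma\|v\|_RL_0}{(1-\sigma_R)\sqrt m}\Big)^{1/a},\ \Big(\frac{\mu_f\lambda\hat\gamma u^\top v+2\hat\gamma c_0L_0\|R\|_2}{1-\sigma_C}\Big)^{1/a},\ \Big(\frac{0.5\mu_f\lambda\hat\gamma u^\top v}{m}\Big)^{1/(a+b)},\ \Big(\frac{3c_1\hat\gamma^2}{c_3\lambda}\Big)^{1/(2a-b)},\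 \Big(\frac{3c_2\hat\gamma}{c_3\lambda}\Big)^{1/(a-b)},\ \Big(\frac{3c_4}{c_3\lambda}\Big)^{1/(1-b)}\Big\}$. *)

theory Defs
  imports "HOL-Analysis.Analysis"
begin

text \<open>Agents are indexed by a finite type 'm (so m = CARD('m)),
 coordinates of points of R^n by a finite type 'n. A stacked iterate
 (an m x n matrix whose rows are agent points) has type real^'n^'m;
 row i is W$i.\<close>

definition strongly_convex :: "real \<Rightarrow> ('a::real_normed_vector \<Rightarrow> real) \<Rightarrow> bool" where
  "strongly_convex \<mu> f \<longleftrightarrow>
     (\<forall>x y. \<forall>t::real. 0 \<le> t \<and> t \<le> 1 \<longrightarrow>
        f (t *\<^sub>R x + (1 - t) *\<^sub>R y)
          \<le> t * f x + (1 - t) * f y - \<mu> / 2 * t * (1 - t) * (norm (x - y))\<^sup>2)"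

definition monotone_op :: "('a::real_inner \<Rightarrow> 'a) \<Rightarrow> bool" where
  "monotone_op F \<longleftrightarrow> (\<forall>x y. (F x - F y) \<bullet> (x - y) \<ge> 0)"

definition SOL :: "('a::real_inner \<Rightarrow> 'a) \<Rightarrow> 'a set" where
  "SOL F = {x. \<forall>y. F x \<bullet> (y - x) \<ge> 0}"

definition is_vnorm :: "(real^'m \<Rightarrow> real) \<Rightarrow> bool" where
  "is_vnorm N \<longleftrightarrow>
     (\<forall>w. 0 \<le> N w) \<and> (\<forall>w. N w = 0 \<longleftrightarrow> w = 0) \<and>
     (\<forall>c w. N (c *\<^sub>R w) = \<bar>c\<bar> * N w) \<and> (\<forall>w z. N (w + z) \<le> N w + N z)"

definition ext_norm :: "(real^'m \<Rightarrow> real) \<Rightarrow> real^'p^'m \<Rightarrow> real" where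
  "ext_norm N W = norm (\<chi> j. N (column j W))"

definition op_norm :: "(real^'m \<Rightarrow> real) \<Rightarrow> real^'m^'m \<Rightarrow> real" where
  "op_norm N A = (SUP w\<in>{w. w \<noteq> 0}. N (A *v w) / N w)"

definition spec_norm :: "real^'m^'m \<Rightarrow> real" where
  "spec_norm A = onorm (\<lambda>w. A *v w)"

definition graph_edges :: "real^'m^'m \<Rightarrow> ('m \<times> 'm) set" where
  "graph_edges B = {(j, i). B $ i $ j > 0}"

text \<open>Roots of spanning trees of G_B: vertices from which every vertex is
  reachable by a directed path (a directed spanning tree rooted at r
  exists iff every vertex is reachable from r).\<close>
definition tree_roots :: "real^'m^'m \<Rightarrow> 'm set" where
  "tree_roots B = {r. \<forall>i. (r, i) \<in> (graph_edges B)\<^sup>*}"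

definition reg_sol :: "('a \<Rightarrow> 'a::real_vector) \<Rightarrow> ('a \<Rightarrow> 'a) \<Rightarrow> real \<Rightarrow> 'a" where
  "reg_sol F gf lam = (THE x. F x + lam *\<^sub>R gf x = 0)"

end

(* The iterates are compared with the Tikhonov path: x_t, the zero of F + t grad f, is
   bounded, moves by O(lambda_k - lambda_(k+1)) between consecutive parameters, and tends to
   the least-f solution x* as t -> 0.  The optimality error e_k = |xbar_k - x_(lambda_k)|, the
   consensus error p_k and the tracking error q_k obey coupled recursions: e contracts at rate
   of order gamma_k lambda_k, perturbed by O(gamma_k (p_k + q_k)) and O(1/k), while p and q
   contract at the fixed rates sigma_R, sigma_C < 1, perturbed by O(gamma_k) and
   O(lambda_k - lambda_(k+1)) terms.  Because gamma_k = o(lambda_k), the Lyapunov function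
   e + kappa lambda_k (p + w q) decays like (k + Gamma)^-(1-a-b), which yields the rates.
   Convergence of xbar_k then follows from e_k -> 0 and x_(lambda_k) -> x*. *)

theory Submission
  imports Defs
begin

section \<open>Column-wise norms of stacked iterates\<close>

lemma is_vnormD:
  assumes "is_vnorm N"
  shows vnorm_nonneg: "0 \<le> N w" and vnorm_triangle: "N (w + z) \<le> N w + N z"
    and vnorm_zero: "N 0 = 0" and vnorm_uminus: "N (- w) = N w"
proof -
  show "0 \<le> N w" "N (w + z) \<le> N w + N z" "N 0 = 0"
    using assms unfolding is_vnorm_def by auto
  show "N (- w) = N w"
    using assms unfolding is_vnorm_def by (metis abs_minus_cancel abs_one mult_1 scaleR_minus1_left)
qed

lemma norm_vec_le_componentwise:
  fixes a b :: "real^'p"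
  assumes "\<And>l. 0 \<le> a $ l" and "\<And>l. a $ l \<le> b $ l"
  shows "norm a \<le> norm b"
proof -
  have "\<bar>a $ l\<bar> \<le> \<bar>b $ l\<bar>" for l using assms[of l] by linarith
  then show ?thesis unfolding norm_vec_def by (intro L2_set_mono) auto
qed

lemma norm_eq_norm_columns: "norm (W :: real^'n^'m) = norm (\<chi> l. norm (column l W))"
proof -
  have "(norm W)\<^sup>2 = (\<Sum>i\<in>UNIV. \<Sum>l\<in>UNIV. (W $ i $ l)\<^sup>2)"
    by (simp add: norm_vec_def L2_set_def sum_nonneg)
  also have "\<dots> = (\<Sum>l\<in>UNIV. \<Sum>i\<in>UNIV. (W $ i $ l)\<^sup>2)" by (rule sum.swap)
  also have "\<dots> = (norm (\<chi> l. norm (column l W)))\<^sup>2"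
    by (simp add: norm_vec_def L2_set_def column_def sum_nonneg)
  finally show ?thesis by (simp add: power2_eq_iff_nonneg)
qed

lemma ext_norm_nonneg: "0 \<le> ext_norm N W"
  unfolding ext_norm_def by simp

lemma ext_norm_triangle:
  assumes "is_vnorm N"
  shows "ext_norm N (W + Z) \<le> ext_norm N W + ext_norm N Z"
proof -
  have "ext_norm N (W + Z) \<le> norm ((\<chi> l. N (column l W)) + (\<chi> l. N (column l Z)))"
    unfolding ext_norm_def
  proof (rule norm_vec_le_componentwise)
    fix l
    have "column l (W + Z) = column l W + column l Z" by (simp add: column_def vec_eq_iff)
    then show "(\<chi> l. N (column l (W + Z))) $ l \<le> ((\<chi> l. N (column l W)) + (\<chi> l. N (column l Z))) $ l"
      using vnorm_triangle[OF assms] by simp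
  qed (use vnorm_nonneg[OF assms] in simp)
  also have "\<dots> \<le> ext_norm N W + ext_norm N Z"
    unfolding ext_norm_def by (rule norm_triangle_ineq)
  finally show ?thesis .
qed

lemma ext_norm_uminus:
  assumes "is_vnorm N"
  shows "ext_norm N (- W) = ext_norm N W"
proof -
  have "column l (- W) = - column l W" for l by (simp add: column_def vec_eq_iff)
  then show ?thesis unfolding ext_norm_def using vnorm_uminus[OF assms] by simp
qed

lemma ext_norm_triangle_diff:
  assumes "is_vnorm N"
  shows "ext_norm N (W - Z) \<le> ext_norm N W + ext_norm N Z"
  using ext_norm_triangle[OF assms, of W "- Z"] ext_norm_uminus[OF assms, of Z] by simp

lemma norm_le_ext_norm:
  assumes "\<And>w. norm w \<le> N w"
  shows "norm W \<le> ext_norm N W"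
  unfolding ext_norm_def norm_eq_norm_columns[of W]
  by (rule norm_vec_le_componentwise) (use assms in auto)

lemma vnorm_bound_const_nonneg:
  assumes "is_vnorm N" and "\<And>w. N w \<le> K * norm w"
  shows "0 \<le> K"
proof -
  have "0 < N 1" using assms(1) unfolding is_vnorm_def by (metis less_eq_real_def one_neq_zero)
  then show ?thesis using assms(2)[of 1] by (smt (verit) mult_nonpos_nonneg norm_ge_zero)
qed

lemma ext_norm_le_norm:
  assumes "is_vnorm N" and "\<And>w. N w \<le> K * norm w"
  shows "ext_norm N (W :: real^'p^'m) \<le> K * norm W"
proof -
  have K: "0 \<le> K" by (rule vnorm_bound_const_nonneg[OF assms])
  have "ext_norm N W \<le> norm (K *\<^sub>R (\<chi> l. norm (column l W)))"
    unfolding ext_norm_def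
    by (rule norm_vec_le_componentwise) (use assms vnorm_nonneg[OF assms(1)] in auto)
  also have "\<dots> = K * norm W" using K by (simp add: norm_eq_norm_columns[of W])
  finally show ?thesis .
qed

lemma op_norm_bounds:
  fixes A :: "real^'m^'m"
  assumes N: "is_vnorm N" and ge: "\<And>w. norm w \<le> N w" and le: "\<And>w. N w \<le> K * norm w"
  shows op_norm_mult_le: "N (A *v w) \<le> op_norm N A * N w"
    and op_norm_nonneg: "0 \<le> op_norm N A"
proof -
  have K: "0 \<le> K" by (rule vnorm_bound_const_nonneg[OF N le])
  have bdd: "bdd_above ((\<lambda>w. N (A *v w) / N w) ` {w. w \<noteq> 0})"
  proof (rule bdd_aboveI2)
    fix w :: "real^'m" assume "w \<in> {w. w \<noteq> 0}"
    then have Nw: "0 < N w" using ge[of w] by (smt (verit) mem_Collect_eq zero_less_norm_iff)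
    have "N (A *v w) \<le> K * (onorm ((*v) A) * norm w)"
    proof -
      have "norm (A *v w) \<le> onorm ((*v) A) * norm w"
        by (rule onorm) (rule matrix_vector_mul_bounded_linear)
      then show ?thesis using le[of "A *v w"] K by (meson mult_left_mono order_trans)
    qed
    also have "\<dots> \<le> K * onorm ((*v) A) * N w"
    proof -
      have "0 \<le> onorm ((*v) A)" by (rule onorm_pos_le) (rule matrix_vector_mul_bounded_linear)
      then show ?thesis using ge[of w] K by (simp add: mult.assoc mult_left_mono)
    qed
    finally show "N (A *v w) / N w \<le> K * onorm ((*v) A)" using Nw by (simp add: divide_le_eq)
  qed
  show "N (A *v w) \<le> op_norm N A * N w"
  proof (cases "w = 0")
    case True then show ?thesis using vnorm_zero[OF N] by simp
  next
    case False
    then have "N (A *v w) / N w \<le> op_norm N A"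
      unfolding op_norm_def by (intro cSUP_upper bdd) simp
    moreover have "0 < N w" using False ge[of w] by (smt (verit) zero_less_norm_iff)
    ultimately show ?thesis by (simp add: divide_le_eq)
  qed
  have "N (A *v 1) / N 1 \<le> op_norm N A"
    unfolding op_norm_def by (intro cSUP_upper bdd) simp
  moreover have "0 \<le> N (A *v 1) / N 1" using N unfolding is_vnorm_def by simp
  ultimately show "0 \<le> op_norm N A" by linarith
qed

lemma matrix_mult_row: "(A ** W) $ i = (\<Sum>j\<in>UNIV. A $ i $ j *\<^sub>R W $ j)"
  for A :: "real^'m^'k" and W :: "real^'n^'m"
  by (simp add: matrix_matrix_mult_def vec_eq_iff sum_component)

lemma matrix_mult_diff_left: "(A - B) ** W = A ** W - B ** W"
  for A B :: "real^'m^'k" and W :: "real^'n^'m"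
  by (simp add: matrix_matrix_mult_def vec_eq_iff algebra_simps sum_subtractf)

lemma matrix_mult_diff_right: "A ** (V - W) = A ** V - A ** W"
  for A :: "real^'m^'k" and V W :: "real^'n^'m"
  by (simp add: matrix_matrix_mult_def vec_eq_iff algebra_simps sum_subtractf)

lemma column_matrix_mult: "column l (A ** W) = A *v column l W"
  by (simp add: matrix_matrix_mult_def column_def matrix_vector_mult_def vec_eq_iff mult.commute)

lemma ext_norm_matrix_mult:
  fixes A :: "real^'m^'m" and W :: "real^'p^'m"
  assumes N: "is_vnorm N" and "\<And>w. norm w \<le> N w" and "\<And>w. N w \<le> K * norm w"
  shows "ext_norm N (A ** W) \<le> op_norm N A * ext_norm N W"
proof -
  have "ext_norm N (A ** W) \<le> norm (op_norm N A *\<^sub>R (\<chi> l. N (column l W)))"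
    unfolding ext_norm_def column_matrix_mult
    by (rule norm_vec_le_componentwise) (use op_norm_mult_le[OF assms] vnorm_nonneg[OF N] in auto)
  also have "\<dots> = op_norm N A * ext_norm N W"
    unfolding ext_norm_def using op_norm_nonneg[OF assms] by simp
  finally show ?thesis .
qed

lemma norm_scaled_rows_le:
  fixes W :: "real^'n^'m"
  assumes "\<And>i. 0 \<le> c i" and "\<And>i. c i \<le> M"
  shows "norm (\<chi> i. c i *\<^sub>R W $ i) \<le> M * norm W"
proof -
  have M: "0 \<le> M" using assms by (meson order_trans)
  have "norm (\<chi> i. c i *\<^sub>R W $ i) \<le> M * norm (\<chi> i. norm (W $ i))"
    unfolding norm_vec_def[of "\<chi> i. c i *\<^sub>R W $ i"] norm_vec_def[of "\<chi> i. norm (W $ i)"]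
      L2_set_right_distrib[OF M]
    by (rule L2_set_mono) (use assms M in \<open>auto intro: mult_right_mono\<close>)
  also have "\<dots> = M * norm W" using M by (simp add: norm_vec_def)
  finally show ?thesis .
qed

lemma norm_outer_product: "norm (\<chi> i. c $ i *\<^sub>R z) = norm c * norm (z :: real^'n)"
  for c :: "real^'m"
proof -
  have "norm (\<chi> i. c $ i *\<^sub>R z) = L2_set (\<lambda>i. norm (c $ i) * norm z) UNIV"
    by (simp add: norm_vec_def[of "\<chi> i. c $ i *\<^sub>R z"])
  also have "\<dots> = norm c * norm z"
    by (simp add: L2_set_left_distrib[symmetric] norm_vec_def[of c])
  finally show ?thesis .
qed

lemma norm_le_sum_rows: "norm (W :: real^'n^'m) \<le> (\<Sum>i\<in>UNIV. norm (W $ i))"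
  unfolding norm_vec_def[of W] by (rule L2_set_le_sum) simp

lemma norm_diff_diff_add_le: "norm (a - b - c + d) \<le> norm a + norm b + norm c + norm d"
  for a b c d :: "'a::real_normed_vector"
proof -
  have "norm (a - b - c + d) \<le> norm (a - b - c) + norm d" by (rule norm_triangle_ineq)
  also have "norm (a - b - c) \<le> norm (a - b) + norm c" by (rule norm_triangle_ineq4)
  also have "norm (a - b) \<le> norm a + norm b" by (rule norm_triangle_ineq4)
  finally show ?thesis by simp
qed

section \<open>Strongly monotone operators\<close>

lemma lipschitz_on_sum:
  fixes F :: "'i \<Rightarrow> 'a::metric_space \<Rightarrow> 'b::real_normed_vector"
  assumes "finite I" and "\<And>i. i \<in> I \<Longrightarrow> L-lipschitz_on U (F i)" and "0 \<le> L"
  shows "(real (card I) * L)-lipschitz_on U (\<lambda>x. \<Sum>i\<in>I. F i x)"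
  using assms
proof (induction I rule: finite_induct)
  case empty
  then show ?case using lipschitz_on_constant by simp
next
  case (insert i I)
  have "(L + real (card I) * L)-lipschitz_on U (\<lambda>x. F i x + (\<Sum>i\<in>I. F i x))"
    using insert by (intro lipschitz_on_add) auto
  then show ?case using insert by (simp add: algebra_simps)
qed

lemma SOL_eq_zeros: "SOL F = {x. F x = 0}"
proof -
  have "F x = 0" if "\<forall>y. 0 \<le> F x \<bullet> (y - x)" for x
  proof -
    have "0 \<le> F x \<bullet> ((x - F x) - x)" using that by blast
    then have "F x \<bullet> F x = 0" using inner_ge_zero[of "F x"] by simp
    then show ?thesis by simp
  qed
  then show ?thesis unfolding SOL_def by auto
qed

lemma strongly_convex_first_order:
  fixes \<phi> :: "'a::real_inner \<Rightarrow> real"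
  assumes deriv: "(\<phi> has_derivative (\<lambda>h. g x \<bullet> h)) (at x)" and sc: "strongly_convex \<mu> \<phi>"
  shows "\<phi> x + g x \<bullet> (y - x) + \<mu> / 2 * (norm (y - x))\<^sup>2 \<le> \<phi> y"
proof -
  define d where "d = y - x"
  define \<psi> where "\<psi> t = \<phi> (x + t *\<^sub>R d)" for t :: real
  have "(\<psi> has_field_derivative (g x \<bullet> d)) (at 0)"
  proof -
    have "((\<phi> \<circ> (\<lambda>t. x + t *\<^sub>R d)) has_derivative ((\<lambda>h. g x \<bullet> h) \<circ> (\<lambda>t. t *\<^sub>R d))) (at 0)"
      by (rule diff_chain_at) (auto intro!: derivative_eq_intros simp: deriv)
    moreover have "(\<lambda>h. g x \<bullet> h) \<circ> (\<lambda>t. t *\<^sub>R d) = (*) (g x \<bullet> d)"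
      by (auto simp: fun_eq_iff)
    ultimately show ?thesis
      unfolding has_field_derivative_def \<psi>_def by (simp add: o_def)
  qed
  then have slope: "((\<lambda>t. (\<psi> t - \<psi> 0) / (t - 0)) \<longlongrightarrow> g x \<bullet> d) (at_right 0)"
    using has_field_derivative_iff has_field_derivative_at_within by blast
  have bound: "\<forall>\<^sub>F t in at_right 0. (\<psi> t - \<psi> 0) / (t - 0) \<le> \<phi> y - \<phi> x - \<mu> / 2 * (1 - t) * (norm d)\<^sup>2"
    using eventually_at_right_real[OF zero_less_one]
  proof (rule eventually_mono)
    fix t :: real assume t: "t \<in> {0<..<1}"
    have "\<phi> (t *\<^sub>R y + (1 - t) *\<^sub>R x) \<le> t * \<phi> y + (1 - t) * \<phi> x - \<mu> / 2 * t * (1 - t) * (norm d)\<^sup>2"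
      using sc t unfolding strongly_convex_def d_def by auto
    moreover have "t *\<^sub>R y + (1 - t) *\<^sub>R x = x + t *\<^sub>R d" by (simp add: d_def algebra_simps)
    ultimately have "\<psi> t - \<psi> 0 \<le> t * (\<phi> y - \<phi> x - \<mu> / 2 * (1 - t) * (norm d)\<^sup>2)"
      unfolding \<psi>_def by (simp add: algebra_simps)
    then show "(\<psi> t - \<psi> 0) / (t - 0) \<le> \<phi> y - \<phi> x - \<mu> / 2 * (1 - t) * (norm d)\<^sup>2"
      using t by (simp add: divide_le_eq mult.commute)
  qed
  have "((\<lambda>t. \<phi> y - \<phi> x - \<mu> / 2 * (1 - t) * (norm d)\<^sup>2)
          \<longlongrightarrow> \<phi> y - \<phi> x - \<mu> / 2 * (1 - 0) * (norm d)\<^sup>2) (at_right 0)"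
    by (intro tendsto_intros)
  then have "g x \<bullet> d \<le> \<phi> y - \<phi> x - \<mu> / 2 * (1 - 0) * (norm d)\<^sup>2"
    using tendsto_le[OF trivial_limit_at_right_real _ slope bound] by blast
  then show ?thesis unfolding d_def by simp
qed

lemma strongly_convex_gradient_strongly_monotone:
  fixes \<phi> :: "'a::real_inner \<Rightarrow> real"
  assumes "\<And>z. (\<phi> has_derivative (\<lambda>h. g z \<bullet> h)) (at z)" and "strongly_convex \<mu> \<phi>"
  shows "\<mu> * (norm (x - y))\<^sup>2 \<le> (g x - g y) \<bullet> (x - y)"
  using strongly_convex_first_order[OF assms(1) assms(2), where x=x and y=y]
    strongly_convex_first_order[OF assms(1) assms(2), where x=y and y=x]
  by (simp add: norm_minus_commute inner_diff_left inner_diff_right)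

lemma norm_forward_step_diff_sq:
  fixes T :: "'a::real_inner \<Rightarrow> 'a"
  assumes sm: "c * (norm (x - y))\<^sup>2 \<le> (T x - T y) \<bullet> (x - y)"
    and lip: "norm (T x - T y) \<le> L * norm (x - y)" and "0 \<le> \<eta>"
  shows "(norm ((x - \<eta> *\<^sub>R T x) - (y - \<eta> *\<^sub>R T y)))\<^sup>2
           \<le> (1 - 2 * \<eta> * c + \<eta>\<^sup>2 * L\<^sup>2) * (norm (x - y))\<^sup>2"
proof -
  define d where "d = T x - T y"
  have step: "(x - \<eta> *\<^sub>R T x) - (y - \<eta> *\<^sub>R T y) = (x - y) - \<eta> *\<^sub>R d"
    by (simp add: d_def algebra_simps)
  have "2 * \<eta> * (d \<bullet> (x - y)) = (norm (x - y))\<^sup>2 + \<eta>\<^sup>2 * (norm d)\<^sup>2 - (norm ((x - y) - \<eta> *\<^sub>R d))\<^sup>2"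
    using dot_norm_neg[of "x - y" "\<eta> *\<^sub>R d"] by (simp add: inner_commute power_mult_distrib)
  then have "(norm ((x - \<eta> *\<^sub>R T x) - (y - \<eta> *\<^sub>R T y)))\<^sup>2
      = (norm (x - y))\<^sup>2 - 2 * \<eta> * (d \<bullet> (x - y)) + \<eta>\<^sup>2 * (norm d)\<^sup>2"
    unfolding step by linarith
  also have "\<dots> \<le> (norm (x - y))\<^sup>2 - 2 * \<eta> * (c * (norm (x - y))\<^sup>2) + \<eta>\<^sup>2 * (L * norm (x - y))\<^sup>2"
  proof -
    have "2 * \<eta> * (c * (norm (x - y))\<^sup>2) \<le> 2 * \<eta> * (d \<bullet> (x - y))"
      using sm assms(3) unfolding d_def by (intro mult_left_mono) auto
    moreover have "\<eta>\<^sup>2 * (norm d)\<^sup>2 \<le> \<eta>\<^sup>2 * (L * norm (x - y))\<^sup>2"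
      using lip unfolding d_def by (intro mult_left_mono power_mono) auto
    ultimately show ?thesis by linarith
  qed
  also have "\<dots> = (1 - 2 * \<eta> * c + \<eta>\<^sup>2 * L\<^sup>2) * (norm (x - y))\<^sup>2"
    by (simp add: algebra_simps power_mult_distrib)
  finally show ?thesis .
qed

lemma strongly_monotone_lipschitz_ex1_zero:
  fixes T :: "'a::{real_inner,complete_space} \<Rightarrow> 'a"
  assumes sm: "\<And>x y. c * (norm (x - y))\<^sup>2 \<le> (T x - T y) \<bullet> (x - y)"
    and lip: "L-lipschitz_on UNIV T" and c: "0 < c"
  shows "\<exists>!z. T z = 0"
proof -
  have L: "0 \<le> L" using lipschitz_on_nonneg[OF lip] .
  define \<eta> where "\<eta> = c / (L + c)\<^sup>2"
  define q where "q = sqrt (1 - c\<^sup>2 / (L + c)\<^sup>2)"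
  have \<eta>: "0 < \<eta>" using c L by (simp add: \<eta>_def)
  have ratio: "0 < c\<^sup>2 / (L + c)\<^sup>2" "c\<^sup>2 / (L + c)\<^sup>2 \<le> 1"
    using c L by (auto simp: power_mono)
  then have q: "0 \<le> q" "q < 1" unfolding q_def by auto
  have coeff: "1 - 2 * \<eta> * c + \<eta>\<^sup>2 * (L + c)\<^sup>2 = q\<^sup>2"
  proof -
    have "\<eta> * (L + c)\<^sup>2 = c" using c L by (simp add: \<eta>_def)
    then have "\<eta>\<^sup>2 * (L + c)\<^sup>2 = \<eta> * c" by (simp add: power2_eq_square mult.assoc)
    moreover have "\<eta> * c = c\<^sup>2 / (L + c)\<^sup>2" by (simp add: \<eta>_def power2_eq_square)
    ultimately show ?thesis using ratio unfolding q_def by simp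
  qed
  have "\<exists>!z. z - \<eta> *\<^sub>R T z = z"
  proof (rule banach_fix_type[OF q, of "\<lambda>z. z - \<eta> *\<^sub>R T z"], intro allI)
    fix x y :: 'a
    have "(norm ((x - \<eta> *\<^sub>R T x) - (y - \<eta> *\<^sub>R T y)))\<^sup>2 \<le> (1 - 2 * \<eta> * c + \<eta>\<^sup>2 * L\<^sup>2) * (norm (x - y))\<^sup>2"
      by (rule norm_forward_step_diff_sq[OF sm lipschitz_on_normD[OF lip UNIV_I UNIV_I] less_imp_le[OF \<eta>]])
    also have "\<dots> \<le> (1 - 2 * \<eta> * c + \<eta>\<^sup>2 * (L + c)\<^sup>2) * (norm (x - y))\<^sup>2"
      using L c by (intro mult_right_mono add_left_mono mult_left_mono power_mono) auto
    also have "\<dots> = (q * norm (x - y))\<^sup>2"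
      unfolding coeff by (simp add: power_mult_distrib)
    finally have "norm ((x - \<eta> *\<^sub>R T x) - (y - \<eta> *\<^sub>R T y)) \<le> q * norm (x - y)"
      by (rule power2_le_imp_le) (use q in simp)
    then show "dist (x - \<eta> *\<^sub>R T x) (y - \<eta> *\<^sub>R T y) \<le> q * dist x y"
      by (simp add: dist_norm)
  qed
  then obtain z where "z - \<eta> *\<^sub>R T z = z" by blast
  then have "T z = 0" using \<eta> by simp
  moreover have "w = w'" if "T w = 0" "T w' = 0" for w w'
    using sm[of w w'] that c by (simp add: mult_le_0_iff)
  ultimately show ?thesis by blast
qed

lemma forward_step_contraction:
  fixes T :: "'a::real_inner \<Rightarrow> 'a"
  assumes sm: "c * (norm (x - y))\<^sup>2 \<le> (T x - T y) \<bullet> (x - y)"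
    and lip: "norm (T x - T y) \<le> L * norm (x - y)" and zero: "T y = 0"
    and \<eta>: "0 \<le> \<eta>" "\<eta> * L\<^sup>2 \<le> c" "\<eta> * c \<le> 1"
  shows "norm (x - \<eta> *\<^sub>R T x - y) \<le> (1 - \<eta> * c / 2) * norm (x - y)"
proof -
  have step: "(x - \<eta> *\<^sub>R T x) - (y - \<eta> *\<^sub>R T y) = x - \<eta> *\<^sub>R T x - y"
    using zero by simp
  have "(norm (x - \<eta> *\<^sub>R T x - y))\<^sup>2 \<le> (1 - 2 * \<eta> * c + \<eta>\<^sup>2 * L\<^sup>2) * (norm (x - y))\<^sup>2"
    using norm_forward_step_diff_sq[OF sm lip \<eta>(1)] unfolding step .
  also have "\<dots> \<le> (1 - \<eta> * c / 2)\<^sup>2 * (norm (x - y))\<^sup>2"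
  proof (rule mult_right_mono)
    have "\<eta>\<^sup>2 * L\<^sup>2 \<le> \<eta> * c"
      using mult_left_mono[OF \<eta>(2) \<eta>(1)] by (simp add: power2_eq_square mult.assoc)
    moreover have "(1 - \<eta> * c / 2)\<^sup>2 = 1 - \<eta> * c + (\<eta> * c / 2)\<^sup>2"
      by (simp add: power2_diff)
    ultimately show "1 - 2 * \<eta> * c + \<eta>\<^sup>2 * L\<^sup>2 \<le> (1 - \<eta> * c / 2)\<^sup>2"
      using zero_le_power2[of "\<eta> * c / 2"] by linarith
  qed simp
  also have "\<dots> = ((1 - \<eta> * c / 2) * norm (x - y))\<^sup>2"
    by (simp only: power_mult_distrib)
  finally show ?thesis
    by (rule power2_le_imp_le) (use \<eta>(3) in simp)
qed

section \<open>The Tikhonov regularization path\<close>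

locale tikhonov =
  fixes F g :: "'a::euclidean_space \<Rightarrow> 'a" and \<phi> :: "'a \<Rightarrow> real"
    and \<mu> LF Lg :: real and xs :: 'a
  assumes gradient: "\<And>z. (\<phi> has_derivative (\<lambda>h. g z \<bullet> h)) (at z)"
    and strongly_convex: "strongly_convex \<mu> \<phi>" and mu_pos: "0 < \<mu>"
    and monotone: "monotone_op F"
    and lipschitz_F: "LF-lipschitz_on UNIV F" and lipschitz_g: "Lg-lipschitz_on UNIV g"
    and xs_sol: "xs \<in> SOL F" and xs_min: "\<And>z. z \<in> SOL F \<Longrightarrow> \<phi> xs \<le> \<phi> z"
begin

abbreviation xreg :: "real \<Rightarrow> 'a" where "xreg t \<equiv> reg_sol F g t"

lemma first_order: "\<phi> x + g x \<bullet> (y - x) + \<mu> / 2 * (norm (y - x))\<^sup>2 \<le> \<phi> y"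
  by (rule strongly_convex_first_order[OF gradient strongly_convex])

lemma gradient_strongly_monotone: "\<mu> * (norm (x - y))\<^sup>2 \<le> (g x - g y) \<bullet> (x - y)"
  by (rule strongly_convex_gradient_strongly_monotone[OF gradient strongly_convex])

lemma F_monotone: "0 \<le> (F x - F y) \<bullet> (x - y)"
  using monotone unfolding monotone_op_def by blast

lemma F_xs: "F xs = 0"
  using xs_sol by (simp add: SOL_eq_zeros)

definition reg_op :: "real \<Rightarrow> 'a \<Rightarrow> 'a" where "reg_op t x = F x + t *\<^sub>R g x"

lemma reg_op_strongly_monotone:
  assumes "0 \<le> t"
  shows "t * \<mu> * (norm (x - y))\<^sup>2 \<le> (reg_op t x - reg_op t y) \<bullet> (x - y)"
proof -
  have "(reg_op t x - reg_op t y) \<bullet> (x - y) = (F x - F y) \<bullet> (x - y) + t * ((g x - g y) \<bullet> (x - y))"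
    unfolding reg_op_def by (simp add: algebra_simps inner_diff_left inner_add_left)
  moreover have "t * (\<mu> * (norm (x - y))\<^sup>2) \<le> t * ((g x - g y) \<bullet> (x - y))"
    using gradient_strongly_monotone assms by (intro mult_left_mono) auto
  ultimately show ?thesis using F_monotone[of x y] by (simp add: mult.assoc)
qed

lemma reg_op_lipschitz:
  assumes "0 \<le> t"
  shows "(LF + t * Lg)-lipschitz_on UNIV (reg_op t)"
  unfolding reg_op_def[abs_def] using assms
  by (intro lipschitz_on_add lipschitz_on_cmult_nonneg lipschitz_F lipschitz_g) simp

lemma reg_op_reg_sol:
  assumes "0 < t"
  shows "reg_op t (xreg t) = 0"
proof -
  have "\<exists>!x. reg_op t x = 0"
    using assms mu_pos
    by (intro strongly_monotone_lipschitz_ex1_zero[OF reg_op_strongly_monotone reg_op_lipschitz]) auto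
  then show ?thesis unfolding reg_sol_def reg_op_def[abs_def] by (rule theI')
qed

lemma reg_sol_eq:
  assumes "0 < t"
  shows "F (xreg t) = - t *\<^sub>R g (xreg t)"
  using reg_op_reg_sol[OF assms] unfolding reg_op_def by (simp add: eq_neg_iff_add_eq_0)

lemma reg_sol_gradient_inner:
  assumes "0 < t"
  shows "0 \<le> g (xreg t) \<bullet> (xs - xreg t)"
proof -
  have "0 \<le> - t * (g (xreg t) \<bullet> (xreg t - xs))"
    using F_monotone[of "xreg t" xs] by (simp add: reg_sol_eq[OF assms] F_xs)
  then show ?thesis
    using assms by (simp add: mult_le_0_iff inner_diff_right)
qed

lemma reg_sol_dist_le:
  assumes "0 < t"
  shows "norm (xreg t - xs) \<le> norm (g xs) / \<mu>"
proof -
  have "\<mu> * (norm (xreg t - xs))\<^sup>2 \<le> (g (xreg t) - g xs) \<bullet> (xreg t - xs)"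
    by (rule gradient_strongly_monotone)
  also have "\<dots> \<le> - (g xs \<bullet> (xreg t - xs))"
    using reg_sol_gradient_inner[OF assms] by (simp add: inner_diff_left inner_diff_right)
  also have "\<dots> \<le> norm (g xs) * norm (xreg t - xs)"
    by (metis abs_le_iff Cauchy_Schwarz_ineq2 inner_minus_left)
  finally have "\<mu> * norm (xreg t - xs) * norm (xreg t - xs) \<le> norm (g xs) * norm (xreg t - xs)"
    by (simp add: power2_eq_square mult.assoc)
  then show ?thesis
    using mu_pos by (cases "xreg t = xs") (auto simp: field_simps)
qed

definition grad_bound :: real where "grad_bound = norm (g xs) + Lg * (norm (g xs) / \<mu>)"

lemma grad_bound_nonneg: "0 \<le> grad_bound"
  unfolding grad_bound_def using mu_pos lipschitz_on_nonneg[OF lipschitz_g] by simp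

lemma reg_sol_gradient_le:
  assumes "0 < t"
  shows "norm (g (xreg t)) \<le> grad_bound"
proof -
  have "norm (g (xreg t) - g xs) \<le> Lg * (norm (g xs) / \<mu>)"
    using lipschitz_on_normD[OF lipschitz_g UNIV_I UNIV_I, of "xreg t" xs]
      reg_sol_dist_le[OF assms] lipschitz_on_nonneg[OF lipschitz_g]
    by (meson mult_left_mono order_trans)
  then show ?thesis
    unfolding grad_bound_def by (metis add.commute norm_triangle_sub order_trans add_left_mono)
qed

lemma reg_sol_diff_le:
  assumes "0 < t\<^sub>1" and "t\<^sub>1 \<le> t\<^sub>2"
  shows "t\<^sub>1 * \<mu> * norm (xreg t\<^sub>1 - xreg t\<^sub>2) \<le> (t\<^sub>2 - t\<^sub>1) * grad_bound"
proof -
  define z\<^sub>1 z\<^sub>2 where "z\<^sub>1 = xreg t\<^sub>1" and "z\<^sub>2 = xreg t\<^sub>2"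
  define \<delta> where "\<delta> = norm (z\<^sub>1 - z\<^sub>2)"
  have "0 \<le> (F z\<^sub>1 - F z\<^sub>2) \<bullet> (z\<^sub>1 - z\<^sub>2)" by (rule F_monotone)
  also have "\<dots> = (t\<^sub>2 - t\<^sub>1) * (g z\<^sub>2 \<bullet> (z\<^sub>1 - z\<^sub>2)) - t\<^sub>1 * ((g z\<^sub>1 - g z\<^sub>2) \<bullet> (z\<^sub>1 - z\<^sub>2))"
    using assms unfolding z\<^sub>1_def z\<^sub>2_def
    by (simp add: reg_sol_eq algebra_simps inner_diff_left inner_diff_right)
  finally have "t\<^sub>1 * (\<mu> * \<delta>\<^sup>2) \<le> (t\<^sub>2 - t\<^sub>1) * (g z\<^sub>2 \<bullet> (z\<^sub>1 - z\<^sub>2))"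
    using mult_left_mono[OF gradient_strongly_monotone[of z\<^sub>1 z\<^sub>2], of t\<^sub>1] assms
    unfolding \<delta>_def by linarith
  also have "\<dots> \<le> (t\<^sub>2 - t\<^sub>1) * (grad_bound * \<delta>)"
  proof (rule mult_left_mono)
    have "g z\<^sub>2 \<bullet> (z\<^sub>1 - z\<^sub>2) \<le> norm (g z\<^sub>2) * \<delta>"
      unfolding \<delta>_def by (rule norm_cauchy_schwarz)
    also have "\<dots> \<le> grad_bound * \<delta>"
      using reg_sol_gradient_le assms unfolding z\<^sub>2_def \<delta>_def by (intro mult_right_mono) auto
    finally show "g z\<^sub>2 \<bullet> (z\<^sub>1 - z\<^sub>2) \<le> grad_bound * \<delta>" .
  qed (use assms in simp)
  finally have "(t\<^sub>1 * \<mu> * \<delta>) * \<delta> \<le> ((t\<^sub>2 - t\<^sub>1) * grad_bound) * \<delta>"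
    by (simp add: power2_eq_square algebra_simps)
  then show ?thesis
    unfolding \<delta>_def z\<^sub>1_def z\<^sub>2_def[symmetric]
    using assms grad_bound_nonneg by (cases "xreg t\<^sub>1 = xreg t\<^sub>2") (auto simp: z\<^sub>2_def)
qed

text \<open>A limit point of the regularization path as \<open>t \<rightarrow> 0\<close> solves the variational
  inequality, so minimality of \<open>xs\<close> there, combined with the strong convexity estimate
  \<open>\<phi>(x\<^sub>t) + \<mu>/2 \<parallel>xs - x\<^sub>t\<parallel>\<^sup>2 \<le> \<phi>(xs)\<close>, pins it down to \<open>xs\<close>.\<close>
lemma reg_sol_limit_eq:
  assumes pos: "\<And>k. 0 < lam k" and lam: "lam \<longlonglongrightarrow> 0"
    and lim: "(\<lambda>k. xreg (lam k)) \<longlonglongrightarrow> p"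
  shows "p = xs"
proof -
  have bound: "norm (F p) \<le> LF * norm (p - xreg (lam k)) + lam k * grad_bound" for k
  proof -
    have "norm (F p) \<le> norm (F p - F (xreg (lam k))) + norm (F (xreg (lam k)))"
      using norm_triangle_sub[of "F p" "F (xreg (lam k))"] by simp
    also have "norm (F (xreg (lam k))) \<le> lam k * grad_bound"
      using reg_sol_eq[OF pos] reg_sol_gradient_le[OF pos] pos[of k]
      by (simp add: mult_left_mono less_imp_le)
    finally show ?thesis
      using lipschitz_on_normD[OF lipschitz_F UNIV_I UNIV_I, of p "xreg (lam k)"] by linarith
  qed
  have "(\<lambda>k. LF * norm (p - xreg (lam k)) + lam k * grad_bound) \<longlonglongrightarrow> LF * norm (p - p) + 0 * grad_bound"
    by (intro tendsto_intros lim lam)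
  then have "norm (F p) \<le> 0"
    using bound by (intro tendsto_le[OF trivial_limit_sequentially _ tendsto_const]) auto
  then have "p \<in> SOL F" by (simp add: SOL_eq_zeros)
  then have "\<phi> xs \<le> \<phi> p" by (rule xs_min)
  have estimate: "\<phi> (xreg (lam k)) + \<mu> / 2 * (norm (xs - xreg (lam k)))\<^sup>2 \<le> \<phi> xs" for k
    using first_order[of "xreg (lam k)" xs]
      reg_sol_gradient_inner[OF pos[of k]]
    by linarith
  have "isCont \<phi> p" by (rule has_derivative_continuous[OF gradient])
  then have "(\<lambda>k. \<phi> (xreg (lam k)) + \<mu> / 2 * (norm (xs - xreg (lam k)))\<^sup>2)
      \<longlonglongrightarrow> \<phi> p + \<mu> / 2 * (norm (xs - p))\<^sup>2"
    by (intro tendsto_intros isCont_tendsto_compose[where g = \<phi>] lim)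
  then have "\<phi> p + \<mu> / 2 * (norm (xs - p))\<^sup>2 \<le> \<phi> xs"
    using estimate by (intro tendsto_le[OF trivial_limit_sequentially tendsto_const]) auto
  with \<open>\<phi> xs \<le> \<phi> p\<close> have "\<mu> / 2 * (norm (xs - p))\<^sup>2 \<le> 0" by linarith
  then show "p = xs" using mu_pos by (simp add: mult_le_0_iff)
qed

lemma reg_sol_tendsto:
  assumes pos: "\<And>k. 0 < lam k" and lam: "lam \<longlonglongrightarrow> 0"
  shows "(\<lambda>k. xreg (lam k)) \<longlonglongrightarrow> xs"
proof (rule ccontr)
  assume "\<not> (\<lambda>k. xreg (lam k)) \<longlonglongrightarrow> xs"
  then obtain \<epsilon> where \<epsilon>: "0 < \<epsilon>" "\<not> eventually (\<lambda>k. dist (xreg (lam k)) xs < \<epsilon>) sequentially"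
    unfolding tendsto_iff by auto
  obtain r :: "nat \<Rightarrow> nat" where r: "strict_mono r" "\<forall>n. \<not> dist (xreg (lam (r n))) xs < \<epsilon>"
    using not_eventually_sequentiallyD[OF \<epsilon>(2)] by blast
  have "\<forall>n. xreg (lam (r n)) \<in> cball xs (norm (g xs) / \<mu>)"
    using reg_sol_dist_le[OF pos] by (simp add: dist_norm norm_minus_commute)
  then obtain p and r' :: "nat \<Rightarrow> nat"
    where r': "strict_mono r'" and "((\<lambda>n. xreg (lam (r n))) \<circ> r') \<longlonglongrightarrow> p"
    using seq_compactE[OF compact_imp_seq_compact[OF compact_cball], where f = "\<lambda>n. xreg (lam (r n))"]
    by blast
  then have lim: "(\<lambda>n. xreg (lam (r (r' n)))) \<longlonglongrightarrow> p" by (simp add: o_def)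
  have "(\<lambda>n. lam (r (r' n))) \<longlonglongrightarrow> 0"
    using LIMSEQ_subseq_LIMSEQ[OF LIMSEQ_subseq_LIMSEQ[OF lam r(1)] r'] by (simp add: o_def)
  then have "p = xs" by (rule reg_sol_limit_eq[OF pos _ lim])
  then have "eventually (\<lambda>n. dist (xreg (lam (r (r' n)))) xs < \<epsilon>) sequentially"
    using lim \<epsilon>(1) unfolding tendsto_iff by blast
  then show False using r(2) by (simp add: eventually_sequentially)
qed

end

section \<open>Polynomially decaying parameters\<close>

lemma recursion_bounded_by_decay:
  fixes V s \<rho> :: "nat \<Rightarrow> real"
  assumes pos: "\<And>k. 0 < s k"
    and ev: "eventually (\<lambda>k. 0 \<le> \<rho> k \<and> \<rho> k \<le> 1 \<and> (1 - \<rho> k / 2) * s k \<le> s (Suc k)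
               \<and> V (Suc k) \<le> (1 - \<rho> k) * V k + C * \<rho> k * s k) sequentially"
  shows "\<exists>K. \<forall>k. V k \<le> K * s k"
proof -
  obtain N where N: "\<And>k. N \<le> k \<Longrightarrow> 0 \<le> \<rho> k \<and> \<rho> k \<le> 1 \<and> (1 - \<rho> k / 2) * s k \<le> s (Suc k)
               \<and> V (Suc k) \<le> (1 - \<rho> k) * V k + C * \<rho> k * s k"
    using ev unfolding eventually_sequentially by blast
  define K where "K = max (max (2 * C) 0) (Max ((\<lambda>k. V k / s k) ` {..N}))"
  have K: "0 \<le> K" "2 * C \<le> K" unfolding K_def by auto
  have initial: "V k \<le> K * s k" if "k \<le> N" for k
  proof -
    have "V k / s k \<le> K"
      unfolding K_def using that by (intro max.coboundedI2 Max_ge) auto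
    then show ?thesis using pos[of k] by (simp add: divide_le_eq)
  qed
  have "V k \<le> K * s k" for k
  proof (induction k)
    case 0
    then show ?case by (rule initial) simp
  next
    case (Suc k)
    show ?case
    proof (cases "Suc k \<le> N")
      case True
      then show ?thesis by (rule initial)
    next
      case False
      then have step: "0 \<le> \<rho> k" "\<rho> k \<le> 1" "(1 - \<rho> k / 2) * s k \<le> s (Suc k)"
        "V (Suc k) \<le> (1 - \<rho> k) * V k + C * \<rho> k * s k"
        using N[of k] by auto
      have "(1 - \<rho> k) * V k \<le> (1 - \<rho> k) * (K * s k)"
        using Suc.IH step by (intro mult_left_mono) auto
      moreover have "C * \<rho> k * s k \<le> (K / 2) * \<rho> k * s k"
        using K step pos[of k] by (intro mult_right_mono) auto
      ultimately have "V (Suc k) \<le> K * ((1 - \<rho> k / 2) * s k)"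
        using step by (simp add: algebra_simps)
      also have "\<dots> \<le> K * s (Suc k)"
        using step K by (intro mult_left_mono) auto
      finally show ?thesis .
    qed
  qed
  then show ?thesis by blast
qed

lemma tendsto_divide_powr_zero:
  assumes "0 < r"
  shows "(\<lambda>k. c / (real k + \<Gamma>) powr r) \<longlonglongrightarrow> 0"
proof -
  have "filterlim (\<lambda>k. \<Gamma> + real k) at_top sequentially"
    by (rule filterlim_tendsto_add_at_top[OF tendsto_const filterlim_real_sequentially])
  then have "filterlim (\<lambda>k. real k + \<Gamma>) at_top sequentially"
    by (simp add: add.commute)
  then have "(\<lambda>k. (real k + \<Gamma>) powr (- r)) \<longlonglongrightarrow> 0"
    using assms by (intro tendsto_neg_powr) auto
  then have "(\<lambda>k. c * (real k + \<Gamma>) powr (- r)) \<longlonglongrightarrow> c * 0"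
    by (intro tendsto_mult tendsto_const)
  moreover have "eventually (\<lambda>k. c * (real k + \<Gamma>) powr (- r) = c / (real k + \<Gamma>) powr r) sequentially"
    using eventually_ge_at_top[of "nat \<lceil>1 - \<Gamma>\<rceil>"]
    by eventually_elim (simp add: powr_minus_divide)
  ultimately show ?thesis by (simp add: tendsto_cong)
qed

lemma consensus_pair_contraction:
  fixes \<sigma>R \<sigma>C A w \<rho> g dl e p q p' q' :: real
  assumes \<sigma>: "0 \<le> \<sigma>R" "0 \<le> \<sigma>C" and A: "0 < A" and w: "4 * A * w = 1 - \<sigma>R"
    and \<rho>: "\<rho> \<le> (1 - \<sigma>R) / 2" "\<rho> \<le> (1 - \<sigma>C) / 2"
    and nonneg: "0 \<le> e" "0 \<le> p" "0 \<le> q" and dl: "0 \<le> dl" "dl \<le> g"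
    and small: "g \<le> 1 / 4" "8 * A * g \<le> 1 - \<sigma>R" "8 * A * g \<le> 1 - \<sigma>C" "8 * A * g \<le> w * (1 - \<sigma>C)"
    and p': "p' \<le> \<sigma>R * p + A * g * (q + e + p)"
    and q': "q' \<le> \<sigma>C * q + A * (p + g * (q + e + p)) + A * dl * (1 + e + p)"
  shows "p' + w * q' \<le> (1 - \<rho>) * (p + w * q) + A * (1 + 2 * w) * g * e + w * A * dl"
proof -
  have "0 \<le> 8 * A * g" using A dl by simp
  then have w0: "0 \<le> w" and \<sigma>C1: "\<sigma>C \<le> 1"
    using w small(2,3) A by (smt (verit) mult_pos_neg)+
  have "p' + w * q' \<le> \<sigma>R * p + A * g * (q + e + p)
      + w * (\<sigma>C * q + A * (p + g * (q + e + p)) + A * dl * (1 + e + p))"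
    using p' q' w0 by (intro add_mono mult_left_mono) auto
  also have "\<dots> = (\<sigma>R + A * g + w * A * (1 + g + dl)) * p + (A * g + w * (\<sigma>C + A * g)) * q
      + (A * g + w * A * g + w * A * dl) * e + w * A * dl"
    by (simp add: algebra_simps)
  also have "\<dots> \<le> (1 - \<rho>) * p + (w * (1 - \<rho>)) * q + (A * (1 + 2 * w) * g) * e + w * A * dl"
  proof (intro add_mono mult_right_mono order_refl nonneg)
    have wA: "w * A = (1 - \<sigma>R) / 4" using w by (simp add: field_simps w[symmetric])
    moreover have "0 \<le> w * A" using w0 A by simp
    ultimately have "0 \<le> (1 - \<sigma>R) / 4" by simp
    then have "w * A * (1 + g + dl) \<le> (1 - \<sigma>R) / 4 * (3 / 2)"
      unfolding wA using small(1) dl by (intro mult_left_mono) auto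
    moreover have "A * g \<le> (1 - \<sigma>R) / 8" using small(2) by (simp add: mult.assoc)
    ultimately have "\<sigma>R + A * g + w * A * (1 + g + dl) \<le> \<sigma>R + (1 - \<sigma>R) / 8 + (1 - \<sigma>R) / 4 * (3 / 2)"
      by (intro add_mono) auto
    also have "\<dots> \<le> 1 - \<rho>" using \<rho>(1) by (simp add: field_simps)
    finally show "\<sigma>R + A * g + w * A * (1 + g + dl) \<le> 1 - \<rho>" .
  next
    have "w * (A * g) \<le> w * ((1 - \<sigma>C) / 8)" using w0 small(3) by (intro mult_left_mono) auto
    then have "A * g + w * (\<sigma>C + A * g) \<le> w * (\<sigma>C + (1 - \<sigma>C) / 4)"
      using small(4) by (simp add: algebra_simps)
    also have "\<dots> \<le> w * (1 - \<rho>)"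
      using w0 \<rho>(2) \<sigma>C1 by (intro mult_left_mono) (simp_all add: field_simps)
    finally show "A * g + w * (\<sigma>C + A * g) \<le> w * (1 - \<rho>)" .
  next
    have "w * A * dl \<le> w * A * g" using w0 A dl by (intro mult_left_mono) auto
    then show "A * g + w * A * g + w * A * dl \<le> A * (1 + 2 * w) * g"
      by (simp add: algebra_simps)
  qed (use A dl in auto)
  also have "\<dots> = (1 - \<rho>) * (p + w * q) + A * (1 + 2 * w) * g * e + w * A * dl"
    by (simp add: algebra_simps)
  finally show ?thesis .
qed

lemma add_mult_le_one_plus_mult:
  fixes X q s :: real
  assumes "0 \<le> X" "0 \<le> q" "0 \<le> s"
  shows "q + X * s \<le> (1 + X) * (q + s)"
  using assms by (simp add: algebra_simps)

lemma lyapunov_step: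
  fixes e e' W W' g l l' \<kappa> c \<rho> B F :: real
  assumes "0 \<le> W" "0 \<le> W'" "0 \<le> \<kappa>" "0 \<le> l" "l' \<le> l" "\<kappa> * B = c / 2"
    and "B * g + \<kappa> * l * (1 - \<rho>) \<le> \<kappa> * l * (1 - c / 2 * g * l)"
    and "e' \<le> (1 - c * g * l) * e + B * g * W + F \<and> W' \<le> (1 - \<rho>) * W + B * g * e + F"
  shows "e' + \<kappa> * l' * W' \<le> (1 - c / 2 * g * l) * (e + \<kappa> * l * W) + (1 + \<kappa> * l) * F"
proof -
  have c: "c = 2 * \<kappa> * B" using assms(6) by simp
  have "\<kappa> * l' * W' \<le> \<kappa> * l * W'"
    using assms by (intro mult_right_mono mult_left_mono) auto
  also have "\<dots> \<le> \<kappa> * l * ((1 - \<rho>) * W + B * g * e + F)"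
    using assms by (intro mult_left_mono) auto
  finally have "e' + \<kappa> * l' * W' \<le> ((1 - c * g * l) * e + B * g * W + F) + \<kappa> * l * ((1 - \<rho>) * W + B * g * e + F)"
    using assms(8) by linarith
  also have "\<dots> = (1 - c / 2 * g * l) * e + (B * g + \<kappa> * l * (1 - \<rho>)) * W + (1 + \<kappa> * l) * F"
    unfolding c by (simp add: algebra_simps)
  also have "\<dots> \<le> (1 - c / 2 * g * l) * e + (\<kappa> * l * (1 - c / 2 * g * l)) * W + (1 + \<kappa> * l) * F"
    using assms(1,7) by (intro add_mono mult_right_mono order_refl)
  also have "\<dots> = (1 - c / 2 * g * l) * (e + \<kappa> * l * W) + (1 + \<kappa> * l) * F"
    by (simp add: algebra_simps)
  finally show ?thesis .
qed

locale decay_schedule =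
  fixes \<gamma>h lam \<Gamma> a b :: real
  assumes params: "0 < \<gamma>h" "0 < lam" "1 \<le> \<Gamma>" "0 < b" "b < a" "a + b < 1"
begin

definition stepsize :: "nat \<Rightarrow> real" where "stepsize k = \<gamma>h / (real k + \<Gamma>) powr a"
definition regpar :: "nat \<Rightarrow> real" where "regpar k = lam / (real k + \<Gamma>) powr b"
definition decay :: "nat \<Rightarrow> real" where "decay k = 1 / (real k + \<Gamma>) powr (1 - a - b)"

lemma base_ge_1: "1 \<le> real k + \<Gamma>"
  using params by simp

lemma powr_base_ge_1: "0 \<le> r \<Longrightarrow> 1 \<le> (real k + \<Gamma>) powr r"
  using base_ge_1 by (rule ge_one_powr_ge_zero)

lemma stepsize_pos: "0 < stepsize k" and regpar_pos: "0 < regpar k" and decay_pos: "0 < decay k"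
  using params base_ge_1[of k] unfolding stepsize_def regpar_def decay_def by auto

lemma stepsize_le: "stepsize k \<le> \<gamma>h" and regpar_le: "regpar k \<le> lam"
  unfolding stepsize_def regpar_def using params powr_base_ge_1[of a k] powr_base_ge_1[of b k]
  by (auto simp: divide_le_eq intro: order_trans[OF _ mult_left_mono[of 1]])

lemma regpar_Suc_le: "regpar (Suc k) \<le> regpar k"
  unfolding regpar_def using params base_ge_1[of k] by (intro divide_left_mono powr_mono2) auto

lemma stepsize_regpar_decay: "stepsize k * regpar k * decay k = \<gamma>h * lam / (real k + \<Gamma>)"
proof -
  define t where "t = real k + \<Gamma>"
  have "t powr a * t powr b * t powr (1 - a - b) = t powr (a + b + (1 - a - b))"
    by (simp only: powr_add)
  also have "\<dots> = t" using base_ge_1[of k] unfolding t_def by simp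
  finally have "t powr a * t powr b * t powr (1 - a - b) = t" .
  then show ?thesis
    unfolding stepsize_def regpar_def decay_def t_def[symmetric] by (simp add: field_simps)
qed

lemma inverse_le_decay: "1 / (real k + \<Gamma>) \<le> decay k"
proof -
  have "(real k + \<Gamma>) powr (1 - a - b) \<le> (real k + \<Gamma>) powr 1"
    using params base_ge_1[of k] by (intro powr_mono) auto
  then show ?thesis
    unfolding decay_def using base_ge_1[of k] by (intro divide_left_mono) auto
qed

lemma decay_Suc_ge: "(1 - 1 / (real k + \<Gamma> + 1)) * decay k \<le> decay (Suc k)"
proof -
  define t r where "t = real k + \<Gamma>" and "r = 1 - a - b"
  have t: "1 \<le> t" using base_ge_1 unfolding t_def .
  have "t / (t + 1) \<le> (t / (t + 1)) powr r"
    using powr_mono'[of r 1 "t / (t + 1)"] params t unfolding r_def by simp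
  also have "\<dots> = t powr r / (t + 1) powr r"
    using t by (simp add: powr_divide)
  finally have "t / (t + 1) / t powr r \<le> (t powr r / (t + 1) powr r) / t powr r"
    using t by (intro divide_right_mono) auto
  also have "\<dots> = 1 / (t + 1) powr r" using t by simp
  also have "t / (t + 1) / t powr r = (1 - 1 / (t + 1)) * (1 / t powr r)"
    using t by (simp add: field_simps)
  finally have "(1 - 1 / (t + 1)) * (1 / t powr r) \<le> 1 / (t + 1) powr r" .
  moreover have Suc: "real (Suc k) + \<Gamma> = t + 1" unfolding t_def by simp
  ultimately show ?thesis
    unfolding decay_def Suc t_def[symmetric] r_def[symmetric] by (simp add: add.commute)
qed

lemma decay_Suc_ge':
  assumes "2 / (real k + \<Gamma> + 1) \<le> r"
  shows "(1 - r / 2) * decay k \<le> decay (Suc k)"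
proof -
  have "(1 - r / 2) * decay k \<le> (1 - 1 / (real k + \<Gamma> + 1)) * decay k"
    using assms decay_pos[of k] by (intro mult_right_mono) auto
  then show ?thesis using decay_Suc_ge[of k] by linarith
qed

lemma regpar_diff_le: "regpar k - regpar (Suc k) \<le> regpar (Suc k) / (real k + \<Gamma>)"
proof -
  define t where "t = real k + \<Gamma>"
  have t: "1 \<le> t" using base_ge_1 unfolding t_def .
  have "t / (t + 1) \<le> (t / (t + 1)) powr b"
    using powr_mono'[of b 1 "t / (t + 1)"] params t by simp
  also have "(t / (t + 1)) powr b = regpar (Suc k) / regpar k"
  proof -
    have Suc: "real (Suc k) + \<Gamma> = t + 1" unfolding t_def by simp
    show ?thesis using t params unfolding regpar_def Suc t_def[symmetric] by (simp add: powr_divide)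
  qed
  finally have "regpar k * t \<le> regpar (Suc k) * (t + 1)"
    using regpar_pos[of k] t by (simp add: field_simps)
  then show ?thesis
    using t unfolding t_def[symmetric] by (simp add: field_simps)
qed

lemma regpar_tendsto_zero: "regpar \<longlonglongrightarrow> 0"
  unfolding regpar_def[abs_def] using params by (intro tendsto_divide_powr_zero) simp

lemma decay_tendsto_zero: "decay \<longlonglongrightarrow> 0"
  unfolding decay_def[abs_def] using params by (intro tendsto_divide_powr_zero) simp

lemma eventually_stepsize_le_regpar:
  assumes "0 < \<epsilon>"
  shows "eventually (\<lambda>k. stepsize k \<le> \<epsilon> * regpar k) sequentially"
proof -
  have "(\<lambda>k. (\<gamma>h / lam) / (real k + \<Gamma>) powr (a - b)) \<longlonglongrightarrow> 0"
    using params by (intro tendsto_divide_powr_zero) simp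
  then have "eventually (\<lambda>k. (\<gamma>h / lam) / (real k + \<Gamma>) powr (a - b) < \<epsilon>) sequentially"
    using assms by (rule order_tendstoD)
  then show ?thesis
  proof eventually_elim
    case (elim k)
    have "stepsize k = (\<gamma>h / lam) / (real k + \<Gamma>) powr (a - b) * regpar k"
      using params base_ge_1[of k] unfolding stepsize_def regpar_def
      by (simp add: powr_diff field_simps)
    then show ?case using elim regpar_pos[of k] by (metis less_imp_le mult_right_mono)
  qed
qed

lemma eventually_stepsize_le:
  assumes "0 < \<epsilon>"
  shows "eventually (\<lambda>k. stepsize k \<le> \<epsilon>) sequentially"
proof -
  have "eventually (\<lambda>k. stepsize k \<le> \<epsilon> / lam * regpar k) sequentially"
    using assms params by (intro eventually_stepsize_le_regpar) simp
  then show ?thesis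
  proof eventually_elim
    case (elim k)
    also have "\<epsilon> / lam * regpar k \<le> \<epsilon> / lam * lam"
      using assms params regpar_le[of k] by (intro mult_left_mono) auto
    finally show ?case using params by simp
  qed
qed

lemma eventually_inverse_le_stepsize_regpar:
  assumes "0 < c"
  shows "eventually (\<lambda>k. 2 / (real k + \<Gamma> + 1) \<le> c * stepsize k * regpar k) sequentially"
proof -
  have "eventually (\<lambda>k. decay k < c * \<gamma>h * lam / 2) sequentially"
    using decay_tendsto_zero assms params by (intro order_tendstoD) auto
  then show ?thesis
  proof eventually_elim
    case (elim k)
    have "2 / (real k + \<Gamma> + 1) \<le> 2 / (real k + \<Gamma>)"
      using base_ge_1[of k] by (intro divide_left_mono) auto
    also have "\<dots> = 2 * decay k / (\<gamma>h * lam) * (stepsize k * regpar k)"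
      using stepsize_regpar_decay[of k] params decay_pos[of k] by (simp add: field_simps)
    also have "\<dots> \<le> c * (stepsize k * regpar k)"
      using elim params stepsize_pos[of k] regpar_pos[of k]
      by (intro mult_right_mono) (auto simp: field_simps)
    finally show ?case by (simp add: mult.assoc)
  qed
qed

lemma eventually_regpar_diff_le_stepsize:
  "eventually (\<lambda>k. regpar k / (real k + \<Gamma>) \<le> stepsize k) sequentially"
proof -
  have "eventually (\<lambda>k. decay k < \<gamma>h / lam) sequentially"
    using decay_tendsto_zero params by (intro order_tendstoD) auto
  then show ?thesis
  proof eventually_elim
    case (elim k)
    have "1 / (real k + \<Gamma>) = stepsize k * regpar k * decay k / (\<gamma>h * lam)"
      using stepsize_regpar_decay[of k] params by simp
    then have "regpar k / (real k + \<Gamma>) = stepsize k * (regpar k * regpar k * decay k / (\<gamma>h * lam))"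
      by (metis times_divide_eq_right mult.commute mult.left_commute mult_1_right)
    also have "\<dots> \<le> stepsize k * (lam * lam * (\<gamma>h / lam) / (\<gamma>h * lam))"
      using elim params regpar_pos[of k] regpar_le[of k] decay_pos[of k] stepsize_pos[of k]
      by (intro mult_left_mono divide_right_mono mult_mono) auto
    also have "\<dots> = stepsize k" using params by simp
    finally show ?case .
  qed
qed

lemma contraction_decay:
  fixes W :: "nat \<Rightarrow> real"
  assumes \<rho>: "0 < \<rho>" "\<rho> \<le> 1"
    and ev: "eventually (\<lambda>k. W (Suc k) \<le> (1 - \<rho>) * W k + C * decay k) sequentially"
  shows "\<exists>K. \<forall>k. W k \<le> K * decay k"
proof -
  have "eventually (\<lambda>k. 2 / (real k + \<Gamma> + 1) \<le> \<rho> / (\<gamma>h * lam) * stepsize k * regpar k) sequentially"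
    using \<rho> params by (intro eventually_inverse_le_stepsize_regpar) simp
  then have "eventually (\<lambda>k. 0 \<le> \<rho> \<and> \<rho> \<le> 1 \<and> (1 - \<rho> / 2) * decay k \<le> decay (Suc k)
      \<and> W (Suc k) \<le> (1 - \<rho>) * W k + C / \<rho> * \<rho> * decay k) sequentially"
    using ev
  proof eventually_elim
    case (elim k)
    have "stepsize k * regpar k \<le> \<gamma>h * lam"
      using params stepsize_le[of k] regpar_le[of k] stepsize_pos[of k] regpar_pos[of k]
      by (intro mult_mono) auto
    then have "\<rho> / (\<gamma>h * lam) * (stepsize k * regpar k) \<le> \<rho> / (\<gamma>h * lam) * (\<gamma>h * lam)"
      by (rule mult_left_mono) (use \<rho> params in simp)
    then have "2 / (real k + \<Gamma> + 1) \<le> \<rho>" using elim(1) params by (simp add: mult.assoc)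
    then show ?case using elim(2) \<rho> decay_Suc_ge' by simp
  qed
  then show ?thesis
    using recursion_bounded_by_decay[where s = decay and \<rho> = "\<lambda>_. \<rho>", OF decay_pos] by blast
qed

text \<open>The Lyapunov function \<open>e + \<kappa> \<lambda>\<^sub>k W\<close> with \<open>\<kappa> = c / (2 B)\<close> decreases at the rate
  \<open>c \<gamma>\<^sub>k \<lambda>\<^sub>k / 2\<close> because \<open>\<gamma>\<^sub>k = o(\<lambda>\<^sub>k)\<close>.\<close>
lemma lyapunov_decay:
  fixes e W :: "nat \<Rightarrow> real" and c \<rho> B :: real
  assumes c: "0 < c" and \<rho>: "0 < \<rho>" "\<rho> \<le> 1" and B: "0 < B" and W: "\<And>k. 0 \<le> W k"
    and ev: "eventually (\<lambda>k.
        e (Suc k) \<le> (1 - c * stepsize k * regpar k) * e k + B * stepsize k * W k + B / (real k + \<Gamma>)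
      \<and> W (Suc k) \<le> (1 - \<rho>) * W k + B * stepsize k * e k + B / (real k + \<Gamma>)) sequentially"
  shows "\<exists>K. \<forall>k. e k \<le> K * decay k"
proof -
  define \<kappa> where "\<kappa> = c / (2 * B)"
  have \<kappa>: "0 < \<kappa>" "\<kappa> * B = c / 2" using c B by (auto simp: \<kappa>_def)
  define V where "V k = e k + \<kappa> * regpar k * W k" for k
  define \<rho>\<^sub>1 where "\<rho>\<^sub>1 k = c / 2 * stepsize k * regpar k" for k
  define C where "C = 2 * (1 + \<kappa> * lam) * B / (c * \<gamma>h * lam)"
  have "eventually (\<lambda>k. stepsize k \<le> \<kappa> * \<rho> / (2 * B) * regpar k) sequentially"
    using \<kappa> \<rho> B by (intro eventually_stepsize_le_regpar) simp
  moreover have "eventually (\<lambda>k. stepsize k \<le> \<rho> / (c * lam)) sequentially"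
    using \<rho> c params by (intro eventually_stepsize_le) simp
  moreover have "eventually (\<lambda>k. 2 / (real k + \<Gamma> + 1) \<le> c / 2 * stepsize k * regpar k) sequentially"
    using c by (intro eventually_inverse_le_stepsize_regpar) simp
  ultimately have "eventually (\<lambda>k. 0 \<le> \<rho>\<^sub>1 k \<and> \<rho>\<^sub>1 k \<le> 1 \<and> (1 - \<rho>\<^sub>1 k / 2) * decay k \<le> decay (Suc k)
      \<and> V (Suc k) \<le> (1 - \<rho>\<^sub>1 k) * V k + C * \<rho>\<^sub>1 k * decay k) sequentially"
    using ev
  proof eventually_elim
    case (elim k)
    define g l t where "g = stepsize k" and "l = regpar k" and "t = real k + \<Gamma>"
    have gl: "0 < g" "0 < l" "l \<le> lam" "0 < t"
      using stepsize_pos regpar_pos regpar_le base_ge_1[of k] unfolding g_def l_def t_def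
      by (auto simp: less_le_trans[OF zero_less_one])
    have \<rho>\<^sub>1: "0 \<le> \<rho>\<^sub>1 k" "\<rho>\<^sub>1 k \<le> \<rho> / 2"
    proof -
      show "0 \<le> \<rho>\<^sub>1 k" using c gl unfolding \<rho>\<^sub>1_def g_def l_def by simp
      have "g * l \<le> \<rho> / (c * lam) * lam"
        using elim(2) gl \<rho> c params unfolding g_def by (intro mult_mono) auto
      then show "\<rho>\<^sub>1 k \<le> \<rho> / 2"
        using c params unfolding \<rho>\<^sub>1_def g_def[symmetric] l_def[symmetric] by (simp add: field_simps)
    qed
    have "B * g \<le> B * (\<kappa> * \<rho> / (2 * B) * l)"
      using elim(1) B unfolding g_def l_def by (intro mult_left_mono) auto
    also have "\<dots> = \<kappa> * l * (\<rho> / 2)" using B by simp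
    finally have "B * g \<le> \<kappa> * l * (\<rho> / 2)" .
    moreover have "\<kappa> * l * (1 - \<rho> / 2) \<le> \<kappa> * l * (1 - \<rho>\<^sub>1 k)"
      using \<kappa> gl \<rho>\<^sub>1 by (intro mult_left_mono) auto
    moreover have "\<kappa> * l * (\<rho> / 2) + \<kappa> * l * (1 - \<rho>) = \<kappa> * l * (1 - \<rho> / 2)"
      by (simp add: algebra_simps)
    ultimately have "B * g + \<kappa> * l * (1 - \<rho>) \<le> \<kappa> * l * (1 - c / 2 * g * l)"
      unfolding \<rho>\<^sub>1_def g_def l_def by linarith
    then have "V (Suc k) \<le> (1 - \<rho>\<^sub>1 k) * V k + (1 + \<kappa> * l) * (B / t)"
      unfolding V_def \<rho>\<^sub>1_def g_def l_def t_def
      by (rule lyapunov_step[OF W W less_imp_le[OF \<kappa>(1)] less_imp_le[OF regpar_pos] regpar_Suc_le \<kappa>(2) _ elim(4)])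
    moreover have "(1 + \<kappa> * l) * (B / t) \<le> (1 + \<kappa> * lam) * B / t"
      using \<kappa> gl B by (simp add: divide_right_mono mult_left_mono)
    moreover have "(1 + \<kappa> * lam) * B / t = (1 + \<kappa> * lam) * B / (\<gamma>h * lam) * (g * l * decay k)"
      using stepsize_regpar_decay[of k] params gl
      unfolding g_def[symmetric] l_def[symmetric] t_def[symmetric] by simp
    moreover have "\<dots> = C * \<rho>\<^sub>1 k * decay k"
      using c params unfolding C_def \<rho>\<^sub>1_def g_def[symmetric] l_def[symmetric]
      by (simp add: field_simps)
    ultimately show ?case
      using \<rho>\<^sub>1 \<rho> decay_Suc_ge'[OF elim(3)[folded \<rho>\<^sub>1_def]] by auto
  qed
  then obtain K where K: "\<And>k. V k \<le> K * decay k"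
    using recursion_bounded_by_decay[where s = decay, OF decay_pos] by blast
  have "e k \<le> K * decay k" for k
    using K[of k] \<kappa> regpar_pos[of k] W[of k] unfolding V_def by (smt (verit) mult_nonneg_nonneg)
  then show ?thesis by blast
qed

lemma coupled_recursion_decay:
  fixes e W :: "nat \<Rightarrow> real" and c \<rho> B :: real
  assumes c: "0 < c" and \<rho>: "0 < \<rho>" "\<rho> \<le> 1" and B: "0 < B" and W: "\<And>k. 0 \<le> W k"
    and ev: "eventually (\<lambda>k.
        e (Suc k) \<le> (1 - c * stepsize k * regpar k) * e k + B * stepsize k * W k + B / (real k + \<Gamma>)
      \<and> W (Suc k) \<le> (1 - \<rho>) * W k + B * stepsize k * e k + B / (real k + \<Gamma>)) sequentially"
  shows "\<exists>K. \<forall>k. e k \<le> K * decay k \<and> W k \<le> K * decay k"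
proof -
  obtain K\<^sub>1 where "\<And>k. e k \<le> K\<^sub>1 * decay k"
    using lyapunov_decay[OF c \<rho> B W ev] by blast
  then have e: "e k \<le> max K\<^sub>1 0 * decay k" for k
    using decay_pos[of k] by (smt (verit) mult_right_mono max.cobounded1)
  have "eventually (\<lambda>k. W (Suc k) \<le> (1 - \<rho>) * W k + B * (\<gamma>h * max K\<^sub>1 0 + 1) * decay k) sequentially"
    using ev
  proof eventually_elim
    case (elim k)
    have "B * stepsize k * e k \<le> B * stepsize k * (max K\<^sub>1 0 * decay k)"
      using e[of k] B stepsize_pos[of k] by (intro mult_left_mono) auto
    also have "\<dots> \<le> B * \<gamma>h * (max K\<^sub>1 0 * decay k)"
      using B stepsize_le[of k] decay_pos[of k] by (intro mult_right_mono mult_left_mono) auto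
    finally have "B * stepsize k * e k \<le> B * \<gamma>h * (max K\<^sub>1 0 * decay k)" .
    moreover have "B / (real k + \<Gamma>) \<le> B * decay k"
      using mult_left_mono[OF inverse_le_decay[of k], of B] B by simp
    moreover have "B * (\<gamma>h * max K\<^sub>1 0 + 1) * decay k = B * \<gamma>h * (max K\<^sub>1 0 * decay k) + B * decay k"
      by (simp add: algebra_simps)
    ultimately show ?case using elim[THEN conjunct2] by linarith
  qed
  then obtain K\<^sub>2 where "\<And>k. W k \<le> K\<^sub>2 * decay k"
    using contraction_decay[OF \<rho>] by blast
  then have "e k \<le> max (max K\<^sub>1 0) K\<^sub>2 * decay k \<and> W k \<le> max (max K\<^sub>1 0) K\<^sub>2 * decay k" for k
    using e[of k] decay_pos[of k] by (smt (verit) mult_right_mono max.cobounded1 max.cobounded2)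
  then show ?thesis by blast
qed

lemma tracking_system_coupled:
  fixes e p q :: "nat \<Rightarrow> real" and A c \<sigma>R \<sigma>C :: real
  assumes nonneg: "\<And>k. 0 \<le> e k" "\<And>k. 0 \<le> p k" "\<And>k. 0 \<le> q k"
    and A: "0 < A" and \<sigma>: "0 \<le> \<sigma>R" "\<sigma>R < 1" "0 \<le> \<sigma>C" "\<sigma>C < 1"
    and ev: "eventually (\<lambda>k.
        e (Suc k) \<le> (1 - c * stepsize k * regpar k) * e k + A * stepsize k * (p k + q k) + A / (real k + \<Gamma>)
      \<and> p (Suc k) \<le> \<sigma>R * p k + A * stepsize k * (q k + e k + p k)
      \<and> q (Suc k) \<le> \<sigma>C * q k + A * (p k + stepsize k * (q k + e k + p k))
                    + A * (regpar k - regpar (Suc k)) * (1 + e k + p k)) sequentially"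
  obtains w \<rho> B where "0 < w" "0 < \<rho>" "\<rho> \<le> 1" "0 < B"
    and "eventually (\<lambda>k.
        e (Suc k) \<le> (1 - c * stepsize k * regpar k) * e k + B * stepsize k * (p k + w * q k) + B / (real k + \<Gamma>)
      \<and> p (Suc k) + w * q (Suc k) \<le> (1 - \<rho>) * (p k + w * q k) + B * stepsize k * e k + B / (real k + \<Gamma>))
      sequentially"
proof -
  define w where "w = (1 - \<sigma>R) / (4 * A)"
  have w: "0 < w" "4 * A * w = 1 - \<sigma>R" using A \<sigma> by (auto simp: w_def)
  define \<rho> where "\<rho> = min (1 - \<sigma>R) (1 - \<sigma>C) / 2"
  have \<rho>: "0 < \<rho>" "\<rho> \<le> 1" "\<rho> \<le> (1 - \<sigma>R) / 2" "\<rho> \<le> (1 - \<sigma>C) / 2"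
    using \<sigma> by (auto simp: \<rho>_def)
  define X where "X = 2 + 2 * w + 1 / w + w * lam"
  have "0 < 1 / w" "0 < w * lam" using w params by auto
  then have X: "1 + 2 * w \<le> X" "1 + 1 / w \<le> X" "1 \<le> X" "w * lam \<le> X"
    unfolding X_def using w by linarith+
  define B where "B = A * X"
  have B: "0 < B" "A * (1 + 2 * w) \<le> B" "A * (1 + 1 / w) \<le> B" "A \<le> B" "w * A * lam \<le> B"
    using A X unfolding B_def by (auto simp: mult_left_mono mult.commute mult.left_commute)
  define W where "W k = p k + w * q k" for k
  have W0: "0 \<le> W k" for k using nonneg w unfolding W_def by simp
  define g\<^sub>0 where "g\<^sub>0 = min (1 / 4) (min ((1 - \<sigma>R) / (8 * A)) (min ((1 - \<sigma>C) / (8 * A)) (w * (1 - \<sigma>C) / (8 * A))))"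
  have "0 < g\<^sub>0" using A w \<sigma> unfolding g\<^sub>0_def by auto
  then have "eventually (\<lambda>k. stepsize k \<le> g\<^sub>0) sequentially" by (rule eventually_stepsize_le)
  then have "eventually (\<lambda>k.
      e (Suc k) \<le> (1 - c * stepsize k * regpar k) * e k + B * stepsize k * W k + B / (real k + \<Gamma>)
    \<and> W (Suc k) \<le> (1 - \<rho>) * W k + B * stepsize k * e k + B / (real k + \<Gamma>)) sequentially"
    using ev eventually_regpar_diff_le_stepsize
  proof eventually_elim
    case (elim k)
    define g dl t where "g = stepsize k" and "dl = regpar k - regpar (Suc k)" and "t = real k + \<Gamma>"
    have t: "0 < t" using base_ge_1[of k] unfolding t_def by linarith
    have g: "0 \<le> g" using stepsize_pos[of k] unfolding g_def by simp
    have "regpar (Suc k) / t \<le> regpar k / t" "regpar k / t \<le> lam / t"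
      using regpar_Suc_le[of k] regpar_le[of k] t by (simp_all add: divide_right_mono)
    then have dl: "0 \<le> dl" "dl \<le> g" "dl \<le> lam / t"
      using regpar_Suc_le[of k] regpar_diff_le[of k] elim(3)
      unfolding dl_def g_def t_def by linarith+
    have small: "g \<le> 1 / 4" "8 * A * g \<le> 1 - \<sigma>R" "8 * A * g \<le> 1 - \<sigma>C" "8 * A * g \<le> w * (1 - \<sigma>C)"
      using elim(1) A unfolding g\<^sub>0_def g_def by (auto simp: field_simps)
    have "W (Suc k) \<le> (1 - \<rho>) * W k + A * (1 + 2 * w) * g * e k + w * A * dl"
      unfolding W_def
      by (rule consensus_pair_contraction[OF \<sigma>(1,3) A w(2) \<rho>(3,4) nonneg dl(1,2) small])
        (use elim(2) in \<open>simp_all add: g_def dl_def\<close>)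
    also have "\<dots> \<le> (1 - \<rho>) * W k + B * g * e k + B / t"
    proof -
      have "A * (1 + 2 * w) * g * e k \<le> B * g * e k"
        using B(2) g nonneg(1)[of k] by (intro mult_right_mono) auto
      moreover have "w * A * dl \<le> w * A * (lam / t)"
        using w A dl(3) by (intro mult_left_mono) auto
      moreover have "w * A * (lam / t) \<le> B / t"
        using B(5) t by (simp add: divide_right_mono)
      ultimately show ?thesis by linarith
    qed
    finally have W_rec: "W (Suc k) \<le> (1 - \<rho>) * W k + B * g * e k + B / t" .
    have "A * g * (p k + q k) \<le> B * g * W k"
    proof -
      have "p k + q k \<le> (1 + 1 / w) * W k"
        using nonneg w unfolding W_def by (simp add: field_simps)
      then have "A * (p k + q k) \<le> A * (1 + 1 / w) * W k"
        using A by (simp add: mult.assoc mult_left_mono)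
      also have "\<dots> \<le> B * W k" using B(3) W0 by (intro mult_right_mono)
      finally have "g * (A * (p k + q k)) \<le> g * (B * W k)" using g by (rule mult_left_mono)
      then show ?thesis by (simp add: mult_ac)
    qed
    moreover have "A / t \<le> B / t" using B(4) t by (simp add: divide_right_mono)
    ultimately show ?case
      using elim(2) W_rec unfolding g_def t_def by (auto simp: mult.assoc)
  qed
  then show thesis using that[OF w(1) \<rho>(1,2) B(1)] unfolding W_def by blast
qed

lemma tracking_system_decay:
  fixes e p q :: "nat \<Rightarrow> real" and A c \<sigma>R \<sigma>C :: real
  assumes nonneg: "\<And>k. 0 \<le> e k" "\<And>k. 0 \<le> p k" "\<And>k. 0 \<le> q k"
    and A: "0 < A" and c: "0 < c" and \<sigma>: "0 \<le> \<sigma>R" "\<sigma>R < 1" "0 \<le> \<sigma>C" "\<sigma>C < 1"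
    and ev: "eventually (\<lambda>k.
        e (Suc k) \<le> (1 - c * stepsize k * regpar k) * e k + A * stepsize k * (p k + q k) + A / (real k + \<Gamma>)
      \<and> p (Suc k) \<le> \<sigma>R * p k + A * stepsize k * (q k + e k + p k)
      \<and> q (Suc k) \<le> \<sigma>C * q k + A * (p k + stepsize k * (q k + e k + p k))
                    + A * (regpar k - regpar (Suc k)) * (1 + e k + p k)) sequentially"
  shows "\<exists>K. \<forall>k. e k \<le> K * decay k \<and> p k \<le> K * decay k \<and> q k \<le> K * decay k"
proof -
  obtain w \<rho> B where w: "0 < w" and \<rho>: "0 < \<rho>" "\<rho> \<le> 1" and B: "0 < B"
    and ev': "eventually (\<lambda>k.
        e (Suc k) \<le> (1 - c * stepsize k * regpar k) * e k + B * stepsize k * (p k + w * q k) + B / (real k + \<Gamma>)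
      \<and> p (Suc k) + w * q (Suc k) \<le> (1 - \<rho>) * (p k + w * q k) + B * stepsize k * e k + B / (real k + \<Gamma>))
      sequentially"
    using tracking_system_coupled[OF nonneg A \<sigma> ev] by blast
  define W where "W k = p k + w * q k" for k
  have W0: "0 \<le> W k" for k using nonneg w unfolding W_def by simp
  obtain K where K: "\<And>k. e k \<le> K * decay k" "\<And>k. W k \<le> K * decay k"
    using coupled_recursion_decay[where e = e and W = W, OF c \<rho> B W0] ev' unfolding W_def by blast
  have "e k \<le> max K (K / w) * decay k \<and> p k \<le> max K (K / w) * decay k
      \<and> q k \<le> max K (K / w) * decay k" for k
  proof -
    have "0 \<le> w * q k" using nonneg(3)[of k] w by simp
    then have "p k \<le> K * decay k" "w * q k \<le> K * decay k"
      using K(2)[of k] nonneg(2)[of k] unfolding W_def by linarith+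
    then have "q k \<le> (K / w) * decay k" using w by (simp add: field_simps mult.commute)
    then show ?thesis using K(1)[of k] \<open>p k \<le> K * decay k\<close> decay_pos[of k]
      by (smt (verit) mult_right_mono max.cobounded1 max.cobounded2)
  qed
  then show ?thesis by blast
qed

end

section \<open>Convergence of IR-Push-Pull\<close>

locale ir_push_pull =
  fixes f :: "'m::finite \<Rightarrow> real^'n::finite \<Rightarrow> real"
    and gf Fi :: "'m \<Rightarrow> real^'n \<Rightarrow> real^'n"
    and \<mu>f Lf LF :: real and xs :: "real^'n"
    and R C :: "real^'m^'m" and u v :: "real^'m"
    and NR NC :: "real^'m \<Rightarrow> real" and \<delta>RC \<delta>C2 :: real
    and \<gamma> :: "nat \<Rightarrow> 'm \<Rightarrow> real" and \<gamma>h lam \<Gamma> a b \<theta> :: real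
    and x y :: "nat \<Rightarrow> real^'n^'m"
    and mr \<sigma>R \<sigma>C :: real and Fs gs :: "real^'n \<Rightarrow> real^'n"
    and lamk \<gamma>hk :: "nat \<Rightarrow> real" and xbar ybar :: "nat \<Rightarrow> real^'n"
  assumes mr: "mr = real CARD('m)"
    and Fs_eq: "Fs = (\<lambda>z. \<Sum>i\<in>UNIV. Fi i z)" and gs_eq: "gs = (\<lambda>z. \<Sum>i\<in>UNIV. gf i z)"
    and lamk_eq: "lamk = (\<lambda>k. lam / (real k + \<Gamma>) powr b)"
    and \<gamma>hk_eq: "\<gamma>hk = (\<lambda>k. \<gamma>h / (real k + \<Gamma>) powr a)"
    and xbar_eq: "xbar = (\<lambda>k. (1 / mr) *\<^sub>R (\<Sum>i\<in>UNIV. u $ i *\<^sub>R x k $ i))"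
    and ybar_eq: "ybar = (\<lambda>k. (1 / mr) *\<^sub>R (\<Sum>i\<in>UNIV. y k $ i))"
    and diff: "\<forall>i z. (f i has_derivative (\<lambda>h. gf i z \<bullet> h)) (at z)"
    and mu_pos: "\<mu>f > 0" and sconv: "strongly_convex \<mu>f (\<lambda>z. \<Sum>i\<in>UNIV. f i z)"
    and lip_f: "\<forall>i. lipschitz_on Lf UNIV (gf i)"
    and mono: "monotone_op Fs" and lip_F: "\<forall>i. lipschitz_on LF UNIV (Fi i)"
    and xs_sol: "xs \<in> SOL Fs" and xs_min: "\<forall>z\<in>SOL Fs. (\<Sum>i\<in>UNIV. f i xs) \<le> (\<Sum>i\<in>UNIV. f i z)"
    and R_row: "R *v (\<chi> i. 1) = (\<chi> i. 1)" and C_col: "(\<chi> i. 1) v* C = (\<chi> i. 1)"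
    and u_nonneg: "\<forall>i. u $ i \<ge> 0" and u_left: "u v* R = u" and u_sum: "(\<Sum>i\<in>UNIV. u $ i) = mr"
    and v_nonneg: "\<forall>i. v $ i \<ge> 0" and v_right: "C *v v = v" and v_sum: "(\<Sum>i\<in>UNIV. v $ i) = mr"
    and y0: "\<forall>i. y 0 $ i = Fi i (x 0 $ i) + lamk 0 *\<^sub>R gf i (x 0 $ i)"
    and x_step: "\<forall>k i. x (Suc k) $ i = (\<Sum>j\<in>UNIV. R $ i $ j *\<^sub>R (x k $ j - \<gamma> k j *\<^sub>R y k $ j))"
    and y_step: "\<forall>k i. y (Suc k) $ i = (\<Sum>j\<in>UNIV. C $ i $ j *\<^sub>R y k $ j)
                   + Fi i (x (Suc k) $ i) + lamk (Suc k) *\<^sub>R gf i (x (Suc k) $ i)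
                   - Fi i (x k $ i) - lamk k *\<^sub>R gf i (x k $ i)"
    and gam_nonneg: "\<forall>k i. \<gamma> k i \<ge> 0" and gam_max: "\<forall>k. Max (range (\<gamma> k)) = \<gamma>hk k"
    and par: "\<gamma>h > 0" "lam > 0" "\<Gamma> \<ge> 1" "b > 0" "a > b" "a + b < 1"
    and theta_pos: "\<theta> > 0"
    and alpha: "\<forall>k. (1 / mr) * (\<Sum>i\<in>UNIV. u $ i * \<gamma> k i * v $ i) \<ge> \<theta> * \<gamma>hk k"
    and NR_norm: "is_vnorm NR" and NC_norm: "is_vnorm NC"
    and \<sigma>R_eq: "\<sigma>R = op_norm NR (R - (\<chi> i j. u $ j / mr))"
    and \<sigma>C_eq: "\<sigma>C = op_norm NC (C - (\<chi> i j. v $ i / mr))"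
    and sigR: "\<sigma>R < 1" and sigC: "\<sigma>C < 1"
    and NR_ge: "\<forall>w. norm w \<le> NR w" and NC_ge: "\<forall>w. norm w \<le> NC w"
    and dRC: "\<forall>w. NR w \<le> \<delta>RC * NC w" and dC2: "\<forall>w. NC w \<le> \<delta>C2 * norm w"
begin

sublocale decay_schedule \<gamma>h lam \<Gamma> a b
  using par by unfold_locales auto

lemma lamk_regpar: "lamk = regpar" and \<gamma>hk_stepsize: "\<gamma>hk = stepsize"
  unfolding lamk_eq \<gamma>hk_eq regpar_def[abs_def] stepsize_def[abs_def] by auto

lemma mr_pos: "0 < mr"
  using mr by simp

sublocale tikhonov Fs gs "\<lambda>z. \<Sum>i\<in>UNIV. f i z" \<mu>f "mr * LF" "mr * Lf" xs
proof
  show "((\<lambda>z. \<Sum>i\<in>UNIV. f i z) has_derivative (\<lambda>h. gs z \<bullet> h)) (at z)" for z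
  proof -
    have "((\<lambda>z. \<Sum>i\<in>UNIV. f i z) has_derivative (\<lambda>h. \<Sum>i\<in>UNIV. gf i z \<bullet> h)) (at z)"
      by (rule has_derivative_sum) (use diff in auto)
    then show ?thesis by (simp add: gs_eq inner_sum_left)
  qed
  show "(mr * LF)-lipschitz_on UNIV Fs" "(mr * Lf)-lipschitz_on UNIV gs"
    unfolding Fs_eq gs_eq mr
    using lip_F lip_f lipschitz_on_nonneg[OF lip_F[rule_format]] lipschitz_on_nonneg[OF lip_f[rule_format]]
    by (auto intro!: lipschitz_on_sum)
qed (use mu_pos sconv mono xs_sol xs_min in auto)

abbreviation xlam :: "nat \<Rightarrow> real^'n" where "xlam k \<equiv> xreg (lamk k)"

definition Tloc :: "nat \<Rightarrow> 'm \<Rightarrow> real^'n \<Rightarrow> real^'n"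
  where "Tloc k i w = Fi i w + lamk k *\<^sub>R gf i w"

definition grad_stack :: "nat \<Rightarrow> real^'n^'m" where "grad_stack k = (\<chi> i. Tloc k i (x k $ i))"
definition scaled_y :: "nat \<Rightarrow> real^'n^'m" where "scaled_y k = (\<chi> j. \<gamma> k j *\<^sub>R y k $ j)"
definition xcons :: "nat \<Rightarrow> real^'n^'m" where "xcons k = x k - (\<chi> i. xbar k)"
definition ycons :: "nat \<Rightarrow> real^'n^'m" where "ycons k = y k - (\<chi> i. v $ i *\<^sub>R ybar k)"
definition JR :: "real^'m^'m" where "JR = (\<chi> i j. u $ j / mr)"
definition JC :: "real^'m^'m" where "JC = (\<chi> i j. v $ i / mr)"

lemma x_Suc: "x (Suc k) = R ** (x k - scaled_y k)"
  using x_step by (simp add: vec_eq_iff matrix_mult_row scaled_y_def)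

lemma y_Suc: "y (Suc k) = C ** y k + (grad_stack (Suc k) - grad_stack k)"
  using y_step by (simp add: vec_eq_iff matrix_mult_row grad_stack_def Tloc_def algebra_simps)

lemma R_row_sum: "(\<Sum>j\<in>UNIV. R $ i $ j) = 1"
  using arg_cong[OF R_row, of "\<lambda>w. w $ i"] by (simp add: matrix_vector_mult_def)

lemma C_column_sum: "(\<Sum>i\<in>UNIV. C $ i $ j) = 1"
  using arg_cong[OF C_col, of "\<lambda>w. w $ j"] by (simp add: vector_matrix_mult_def)

lemma R_mult_const: "R ** (\<chi> i. z) = (\<chi> i. z)"
  by (simp add: vec_eq_iff matrix_mult_row scaleR_sum_left[symmetric] R_row_sum)

lemma JR_mult: "JR ** W = (\<chi> i. (1 / mr) *\<^sub>R (\<Sum>j\<in>UNIV. u $ j *\<^sub>R W $ j))"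
  by (simp add: vec_eq_iff matrix_mult_row JR_def scaleR_sum_right)

lemma JR_mult_R: "JR ** R = JR"
proof -
  have "(\<Sum>k\<in>UNIV. u $ k * R $ k $ j) = u $ j" for j
    using arg_cong[OF u_left, of "\<lambda>w. w $ j"] by (simp add: vector_matrix_mult_def)
  then show ?thesis
    by (simp add: vec_eq_iff JR_def matrix_matrix_mult_def sum_divide_distrib[symmetric])
qed

lemma JR_mult_const: "JR ** (\<chi> i. z) = (\<chi> i. z)"
  using mr_pos by (simp add: JR_mult scaleR_sum_left[symmetric] u_sum)

lemma xcons_eq: "xcons k = x k - JR ** x k"
  unfolding xcons_def by (simp add: JR_mult xbar_eq)

lemma xcons_Suc: "xcons (Suc k) = (R - JR) ** (xcons k - scaled_y k)"
proof -
  have "xcons (Suc k) = (R - JR) ** (x k - scaled_y k)"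
    unfolding xcons_eq x_Suc matrix_mul_assoc JR_mult_R matrix_mult_diff_left ..
  also have "x k - scaled_y k = (xcons k - scaled_y k) + (\<chi> i. xbar k)"
    by (simp add: xcons_def)
  finally show ?thesis
    by (simp add: matrix_add_ldistrib matrix_mult_diff_left R_mult_const JR_mult_const)
qed

lemma x_Suc_diff: "x (Suc k) - x k = (R - mat 1) ** xcons k - R ** scaled_y k"
proof -
  have "x k = xcons k + (\<chi> i. xbar k)" by (simp add: xcons_def)
  then have "(R - mat 1) ** x k = (R - mat 1) ** xcons k"
    by (metis matrix_add_ldistrib matrix_mult_diff_left R_mult_const matrix_mul_lid add_0_right diff_self)
  then show ?thesis
    unfolding x_Suc matrix_mult_diff_right by (simp add: matrix_mult_diff_left)
qed

lemma column_sums_C: "(\<Sum>i\<in>UNIV. (C ** W) $ i) = (\<Sum>i\<in>UNIV. W $ i)"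
  by (simp add: matrix_mult_row sum.swap[of _ UNIV UNIV] scaleR_sum_left[symmetric] C_column_sum)

lemma tracking: "(\<Sum>i\<in>UNIV. y k $ i) = (\<Sum>i\<in>UNIV. grad_stack k $ i)"
proof (induction k)
  case 0
  then show ?case using y0 by (simp add: grad_stack_def Tloc_def)
next
  case (Suc k)
  then show ?case
    unfolding y_Suc by (simp add: sum.distrib sum_subtractf column_sums_C)
qed

lemma ybar_grad_stack: "ybar k = (1 / mr) *\<^sub>R (\<Sum>i\<in>UNIV. grad_stack k $ i)"
  by (simp add: ybar_eq tracking)

lemma JC_mult: "JC ** W = (\<chi> i. (v $ i / mr) *\<^sub>R (\<Sum>j\<in>UNIV. W $ j))"
  by (simp add: vec_eq_iff matrix_mult_row JC_def scaleR_sum_right)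

lemma JC_mult_C: "JC ** C = JC"
proof -
  have "(JC ** C) $ i $ j = (v $ i / mr) * (\<Sum>k\<in>UNIV. C $ k $ j)" for i j
    by (simp add: matrix_matrix_mult_def JC_def sum_distrib_left)
  then show ?thesis by (simp add: vec_eq_iff C_column_sum JC_def)
qed

lemma ycons_eq: "ycons k = y k - JC ** y k"
  unfolding ycons_def by (simp add: JC_mult ybar_eq)

lemma C_minus_JC_mult_v: "(C - JC) ** (\<chi> i. v $ i *\<^sub>R z) = 0"
proof -
  have "(\<Sum>j\<in>UNIV. C $ i $ j * v $ j) = v $ i" for i
    using arg_cong[OF v_right, of "\<lambda>w. w $ i"] by (simp add: matrix_vector_mult_def)
  then have "C ** (\<chi> i. v $ i *\<^sub>R z) = (\<chi> i. v $ i *\<^sub>R z)"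
    by (simp add: vec_eq_iff matrix_mult_row scaleR_sum_left[symmetric])
  moreover have "JC ** (\<chi> i. v $ i *\<^sub>R z) = (\<chi> i. v $ i *\<^sub>R z)"
    using mr_pos by (simp add: JC_mult scaleR_sum_left[symmetric] v_sum)
  ultimately show ?thesis by (simp add: matrix_mult_diff_left)
qed

lemma ycons_Suc: "ycons (Suc k) = (C - JC) ** ycons k + (mat 1 - JC) ** (grad_stack (Suc k) - grad_stack k)"
proof -
  have "ycons (Suc k) = (C - JC) ** y k + (mat 1 - JC) ** (grad_stack (Suc k) - grad_stack k)"
    unfolding ycons_eq y_Suc
    by (simp add: matrix_add_ldistrib matrix_mult_diff_left matrix_mul_assoc JC_mult_C)
  also have "(C - JC) ** y k = (C - JC) ** ycons k"
    by (simp add: ycons_def matrix_mult_diff_right C_minus_JC_mult_v)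
  finally show ?thesis .
qed

definition opt_err :: "nat \<Rightarrow> real" where "opt_err k = norm (xbar k - xlam k)"
definition cons_err :: "nat \<Rightarrow> real" where "cons_err k = ext_norm NR (xcons k)"
definition track_err :: "nat \<Rightarrow> real" where "track_err k = ext_norm NC (ycons k)"

definition Lloc :: real where "Lloc = LF + lam * Lf"
definition \<delta>R2 :: real where "\<delta>R2 = \<delta>RC * \<delta>C2"

lemma LF_nonneg: "0 \<le> LF" and Lf_nonneg: "0 \<le> Lf"
  using lipschitz_on_nonneg lip_F lip_f by blast+

lemma Lloc_nonneg: "0 \<le> Lloc"
  unfolding Lloc_def using LF_nonneg Lf_nonneg par by simp

lemma NR_le: "NR w \<le> \<delta>R2 * norm w"
proof -
  have "NR w \<le> \<delta>RC * NC w" using dRC by blast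
  also have "\<dots> \<le> \<delta>RC * (\<delta>C2 * norm w)"
  proof (rule mult_left_mono)
    have "0 < norm (1 :: real^'m)" by simp
    then have "0 < \<delta>RC * NC 1"
      using NR_ge[rule_format, of 1] dRC[rule_format, of 1] by linarith
    then show "0 \<le> \<delta>RC"
      using vnorm_nonneg[OF NC_norm, of 1] by (simp add: zero_less_mult_iff)
  qed (use dC2 in blast)
  finally show ?thesis unfolding \<delta>R2_def by (simp add: mult.assoc)
qed

lemmas NR_bounds = NR_norm NR_ge[rule_format] NR_le
lemmas NC_bounds = NC_norm NC_ge[rule_format] dC2[rule_format]

lemma \<delta>R2_nonneg: "0 \<le> \<delta>R2"
  using vnorm_bound_const_nonneg[OF NR_norm NR_le] .

lemma \<sigma>R_nonneg: "0 \<le> \<sigma>R" and \<sigma>C_nonneg: "0 \<le> \<sigma>C"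
  unfolding \<sigma>R_eq \<sigma>C_eq by (rule op_norm_nonneg[OF NR_bounds] op_norm_nonneg[OF NC_bounds])+

lemma lamk_pos: "0 < lamk k" and lamk_le: "lamk k \<le> lam"
  unfolding lamk_regpar by (rule regpar_pos regpar_le)+

lemma \<gamma>hk_nonneg: "0 \<le> \<gamma>hk k"
  using stepsize_pos[of k] by (simp add: \<gamma>hk_stepsize)

lemma opt_err_nonneg: "0 \<le> opt_err k" and cons_err_nonneg: "0 \<le> cons_err k"
  and track_err_nonneg: "0 \<le> track_err k"
  unfolding opt_err_def cons_err_def track_err_def by (simp_all add: ext_norm_nonneg)

lemma norm_xcons_row_le: "norm (xcons k $ i) \<le> cons_err k"
  using Finite_Cartesian_Product.norm_nth_le[of "xcons k" i] norm_le_ext_norm[OF NR_ge[rule_format]] unfolding cons_err_def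
  by (rule order_trans)

lemma norm_ycons_row_le: "norm (ycons k $ i) \<le> track_err k"
  using Finite_Cartesian_Product.norm_nth_le[of "ycons k" i] norm_le_ext_norm[OF NC_ge[rule_format]] unfolding track_err_def
  by (rule order_trans)

lemma Tloc_lipschitz: "norm (Tloc k i w - Tloc k i w') \<le> Lloc * norm (w - w')"
proof -
  have "norm (Tloc k i w - Tloc k i w') \<le> norm (Fi i w - Fi i w') + lamk k * norm (gf i w - gf i w')"
    unfolding Tloc_def using lamk_pos[of k]
    by (metis (no_types, lifting) abs_of_pos add_diff_add norm_scaleR norm_triangle_ineq scaleR_right_diff_distrib)
  also have "\<dots> \<le> LF * norm (w - w') + lam * (Lf * norm (w - w'))"
    using lipschitz_on_normD[OF lip_F[rule_format] UNIV_I UNIV_I]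
      lipschitz_on_normD[OF lip_f[rule_format] UNIV_I UNIV_I] lamk_pos[of k] lamk_le[of k] Lf_nonneg
    by (intro add_mono mult_mono) auto
  finally show ?thesis unfolding Lloc_def by (simp add: algebra_simps)
qed

lemma sum_Tloc: "(\<Sum>i\<in>UNIV. Tloc k i w) = reg_op (lamk k) w"
  unfolding Tloc_def reg_op_def by (simp add: Fs_eq gs_eq sum.distrib scaleR_sum_right)

lemma norm_reg_op_xbar_le: "norm (reg_op (lamk k) (xbar k)) \<le> mr * Lloc * opt_err k"
proof -
  have "norm (reg_op (lamk k) (xbar k)) = norm (reg_op (lamk k) (xbar k) - reg_op (lamk k) (xlam k))"
    using reg_op_reg_sol[OF lamk_pos] by simp
  also have "\<dots> \<le> (mr * LF + lamk k * (mr * Lf)) * opt_err k"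
    unfolding opt_err_def using lamk_pos[of k]
    by (intro lipschitz_on_normD[OF reg_op_lipschitz]) auto
  also have "\<dots> \<le> mr * Lloc * opt_err k"
    unfolding Lloc_def using lamk_le[of k] mr_pos Lf_nonneg opt_err_nonneg[of k]
    by (intro mult_right_mono) (auto simp: algebra_simps intro: mult_left_mono mult_right_mono)
  finally show ?thesis .
qed

lemma norm_sum_Tloc_diff_le:
  "norm (\<Sum>i\<in>UNIV. Tloc k i (x k $ i) - Tloc k i (xbar k)) \<le> mr * Lloc * cons_err k"
proof -
  have "norm (\<Sum>i\<in>UNIV. Tloc k i (x k $ i) - Tloc k i (xbar k))
      \<le> (\<Sum>i\<in>(UNIV::'m set). Lloc * cons_err k)"
  proof (rule order_trans[OF norm_sum sum_mono])
    fix i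
    have "norm (Tloc k i (x k $ i) - Tloc k i (xbar k)) \<le> Lloc * norm (xcons k $ i)"
      using Tloc_lipschitz by (simp add: xcons_def)
    also have "\<dots> \<le> Lloc * cons_err k"
      using norm_xcons_row_le Lloc_nonneg by (rule mult_left_mono)
    finally show "norm (Tloc k i (x k $ i) - Tloc k i (xbar k)) \<le> Lloc * cons_err k" .
  qed
  then show ?thesis by (simp add: mr mult.assoc)
qed

lemma sum_grad_stack: "(\<Sum>i\<in>UNIV. grad_stack k $ i)
    = reg_op (lamk k) (xbar k) + (\<Sum>i\<in>UNIV. Tloc k i (x k $ i) - Tloc k i (xbar k))"
  by (simp add: grad_stack_def sum_subtractf sum_Tloc)

lemma norm_ybar_le: "norm (ybar k) \<le> Lloc * (opt_err k + cons_err k)"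
proof -
  have "norm (\<Sum>i\<in>UNIV. grad_stack k $ i) \<le> mr * (Lloc * (opt_err k + cons_err k))"
    unfolding sum_grad_stack
    using norm_triangle_le[OF add_mono[OF norm_reg_op_xbar_le norm_sum_Tloc_diff_le]]
    by (simp add: algebra_simps)
  then show ?thesis
    using mr_pos by (simp add: ybar_grad_stack field_simps)
qed

lemma norm_y_le: "norm (y k) \<le> track_err k + norm v * Lloc * (opt_err k + cons_err k)"
proof -
  have "y k = ycons k + (\<chi> i. v $ i *\<^sub>R ybar k)" by (simp add: ycons_def)
  then have "norm (y k) \<le> norm (ycons k) + norm (\<chi> i. v $ i *\<^sub>R ybar k)"
    by (metis norm_triangle_ineq)
  also have "norm (ycons k) \<le> track_err k"
    unfolding track_err_def by (rule norm_le_ext_norm) (use NC_ge in blast)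
  also have "norm (\<chi> i. v $ i *\<^sub>R ybar k) \<le> norm v * (Lloc * (opt_err k + cons_err k))"
    unfolding norm_outer_product by (intro mult_left_mono norm_ybar_le) simp
  finally show ?thesis by (simp add: mult.assoc)
qed

lemma gam_le: "\<gamma> k i \<le> \<gamma>hk k"
  using Max_ge[of "range (\<gamma> k)" "\<gamma> k i"] gam_max by auto

lemma norm_scaled_y_le: "norm (scaled_y k) \<le> \<gamma>hk k * norm (y k)"
  unfolding scaled_y_def by (rule norm_scaled_rows_le) (use gam_nonneg gam_le in auto)

lemma cons_err_Suc_le: "cons_err (Suc k) \<le> \<sigma>R * cons_err k + \<delta>R2 * \<gamma>hk k * norm (y k)"
proof -
  have "cons_err (Suc k) \<le> \<sigma>R * ext_norm NR (xcons k - scaled_y k)"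
    unfolding cons_err_def xcons_Suc \<sigma>R_eq JR_def by (rule ext_norm_matrix_mult[OF NR_bounds])
  also have "\<dots> \<le> \<sigma>R * (cons_err k + \<delta>R2 * (\<gamma>hk k * norm (y k)))"
  proof (rule mult_left_mono[OF _ \<sigma>R_nonneg])
    have "ext_norm NR (scaled_y k) \<le> \<delta>R2 * norm (scaled_y k)"
      by (rule ext_norm_le_norm[OF NR_norm NR_le])
    also have "\<dots> \<le> \<delta>R2 * (\<gamma>hk k * norm (y k))"
      using norm_scaled_y_le \<delta>R2_nonneg by (rule mult_left_mono)
    finally show "ext_norm NR (xcons k - scaled_y k) \<le> cons_err k + \<delta>R2 * (\<gamma>hk k * norm (y k))"
      using ext_norm_triangle_diff[OF NR_norm, of "xcons k" "scaled_y k"] unfolding cons_err_def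
      by linarith
  qed
  also have "\<dots> \<le> \<sigma>R * cons_err k + \<delta>R2 * \<gamma>hk k * norm (y k)"
  proof -
    have "0 \<le> \<delta>R2 * (\<gamma>hk k * norm (y k))"
      using \<delta>R2_nonneg stepsize_pos[of k] by (simp add: \<gamma>hk_stepsize less_imp_le)
    then have "\<sigma>R * (\<delta>R2 * (\<gamma>hk k * norm (y k))) \<le> \<delta>R2 * (\<gamma>hk k * norm (y k))"
      using sigR \<sigma>R_nonneg by (simp add: mult_left_le_one_le)
    then show ?thesis by (simp add: algebra_simps)
  qed
  finally show ?thesis .
qed

definition c0 :: real where "c0 = \<delta>C2 * op_norm NC (mat 1 - JC)"

lemma c0_nonneg: "0 \<le> c0"
  unfolding c0_def
  using vnorm_bound_const_nonneg[OF NC_norm dC2[rule_format]] op_norm_nonneg[OF NC_bounds] by simp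

lemma track_err_Suc_le:
  "track_err (Suc k) \<le> \<sigma>C * track_err k + c0 * norm (grad_stack (Suc k) - grad_stack k)"
proof -
  have "track_err (Suc k) \<le> ext_norm NC ((C - JC) ** ycons k)
      + ext_norm NC ((mat 1 - JC) ** (grad_stack (Suc k) - grad_stack k))"
    unfolding track_err_def ycons_Suc by (rule ext_norm_triangle[OF NC_norm])
  also have "ext_norm NC ((C - JC) ** ycons k) \<le> \<sigma>C * track_err k"
    unfolding track_err_def \<sigma>C_eq JC_def by (rule ext_norm_matrix_mult[OF NC_bounds])
  also have "ext_norm NC ((mat 1 - JC) ** (grad_stack (Suc k) - grad_stack k))
      \<le> op_norm NC (mat 1 - JC) * ext_norm NC (grad_stack (Suc k) - grad_stack k)"
    by (rule ext_norm_matrix_mult[OF NC_bounds])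
  also have "\<dots> \<le> op_norm NC (mat 1 - JC) * (\<delta>C2 * norm (grad_stack (Suc k) - grad_stack k))"
    by (rule mult_left_mono[OF ext_norm_le_norm[OF NC_norm dC2[rule_format]] op_norm_nonneg[OF NC_bounds]])
  finally show ?thesis unfolding c0_def by (simp add: mult_ac)
qed

lemma norm_x_Suc_diff_le: "norm (x (Suc k) - x k)
    \<le> op_norm NR (R - mat 1) * cons_err k + op_norm NR R * \<delta>R2 * (\<gamma>hk k * norm (y k))"
proof -
  have "norm (x (Suc k) - x k) \<le> ext_norm NR (x (Suc k) - x k)"
    by (rule norm_le_ext_norm) (use NR_ge in blast)
  also have "\<dots> \<le> ext_norm NR ((R - mat 1) ** xcons k) + ext_norm NR (R ** scaled_y k)"
    unfolding x_Suc_diff by (rule ext_norm_triangle_diff[OF NR_norm])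
  also have "ext_norm NR ((R - mat 1) ** xcons k) \<le> op_norm NR (R - mat 1) * cons_err k"
    unfolding cons_err_def by (rule ext_norm_matrix_mult[OF NR_bounds])
  also have "ext_norm NR (R ** scaled_y k) \<le> op_norm NR R * ext_norm NR (scaled_y k)"
    by (rule ext_norm_matrix_mult[OF NR_bounds])
  also have "\<dots> \<le> op_norm NR R * (\<delta>R2 * (\<gamma>hk k * norm (y k)))"
  proof (rule mult_left_mono[OF _ op_norm_nonneg[OF NR_bounds]])
    show "ext_norm NR (scaled_y k) \<le> \<delta>R2 * (\<gamma>hk k * norm (y k))"
      using ext_norm_le_norm[OF NR_norm NR_le] norm_scaled_y_le \<delta>R2_nonneg
      by (meson mult_left_mono order_trans)
  qed
  finally show ?thesis by (simp add: mult.assoc)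
qed

lemma norm_grad_stack_diff_le: "norm (grad_stack (Suc k) - grad_stack k)
    \<le> mr * Lloc * norm (x (Suc k) - x k) + (lamk k - lamk (Suc k)) * (\<Sum>i\<in>UNIV. norm (gf i (x k $ i)))"
proof -
  have dl: "0 \<le> lamk k - lamk (Suc k)" using regpar_Suc_le[of k] by (simp add: lamk_regpar)
  have "norm (grad_stack (Suc k) - grad_stack k) \<le> (\<Sum>i\<in>UNIV. norm ((grad_stack (Suc k) - grad_stack k) $ i))"
    by (rule norm_le_sum_rows)
  also have "\<dots> \<le> (\<Sum>i\<in>UNIV. Lloc * norm (x (Suc k) - x k) + (lamk k - lamk (Suc k)) * norm (gf i (x k $ i)))"
  proof (rule sum_mono)
    fix i
    have "(grad_stack (Suc k) - grad_stack k) $ i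
        = (Tloc (Suc k) i (x (Suc k) $ i) - Tloc (Suc k) i (x k $ i)) - (lamk k - lamk (Suc k)) *\<^sub>R gf i (x k $ i)"
      by (simp add: grad_stack_def Tloc_def algebra_simps)
    then have "norm ((grad_stack (Suc k) - grad_stack k) $ i)
        \<le> norm (Tloc (Suc k) i (x (Suc k) $ i) - Tloc (Suc k) i (x k $ i)) + (lamk k - lamk (Suc k)) * norm (gf i (x k $ i))"
      using norm_triangle_ineq4[of "Tloc (Suc k) i (x (Suc k) $ i) - Tloc (Suc k) i (x k $ i)"
          "(lamk k - lamk (Suc k)) *\<^sub>R gf i (x k $ i)"] dl by simp
    also have "norm (Tloc (Suc k) i (x (Suc k) $ i) - Tloc (Suc k) i (x k $ i)) \<le> Lloc * norm (x (Suc k) - x k)"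
      using Tloc_lipschitz[THEN order_trans] Finite_Cartesian_Product.norm_nth_le[of "x (Suc k) - x k" i] Lloc_nonneg
      by (simp add: mult_left_mono)
    finally show "norm ((grad_stack (Suc k) - grad_stack k) $ i)
        \<le> Lloc * norm (x (Suc k) - x k) + (lamk k - lamk (Suc k)) * norm (gf i (x k $ i))" by simp
  qed
  also have "\<dots> = mr * Lloc * norm (x (Suc k) - x k) + (lamk k - lamk (Suc k)) * (\<Sum>i\<in>UNIV. norm (gf i (x k $ i)))"
    by (simp add: sum.distrib mr sum_distrib_left mult.assoc)
  finally show ?thesis .
qed

lemma sum_norm_gf_le: "(\<Sum>i\<in>UNIV. norm (gf i (x k $ i)))
    \<le> (\<Sum>i\<in>UNIV. norm (gf i xs)) + mr * Lf * (cons_err k + opt_err k + norm (gs xs) / \<mu>f)"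
proof -
  have "(\<Sum>i\<in>UNIV. norm (gf i (x k $ i)))
      \<le> (\<Sum>i\<in>UNIV. norm (gf i xs) + Lf * (cons_err k + opt_err k + norm (gs xs) / \<mu>f))"
  proof (rule sum_mono)
    fix i
    have "x k $ i - xs = xcons k $ i + (xbar k - xlam k) + (xlam k - xs)"
      by (simp add: xcons_def)
    then have "norm (x k $ i - xs) \<le> norm (xcons k $ i) + norm (xbar k - xlam k) + norm (xlam k - xs)"
      by (metis norm_triangle_le order_refl add_mono)
    then have "norm (x k $ i - xs) \<le> cons_err k + opt_err k + norm (gs xs) / \<mu>f"
      using norm_xcons_row_le[of k i] reg_sol_dist_le[OF lamk_pos[of k]] unfolding opt_err_def
      by linarith
    then have "norm (gf i (x k $ i) - gf i xs) \<le> Lf * (cons_err k + opt_err k + norm (gs xs) / \<mu>f)"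
      using lipschitz_on_normD[OF lip_f[rule_format] UNIV_I UNIV_I, of i "x k $ i" xs] Lf_nonneg
      by (meson mult_left_mono order_trans)
    then show "norm (gf i (x k $ i)) \<le> norm (gf i xs) + Lf * (cons_err k + opt_err k + norm (gs xs) / \<mu>f)"
      using norm_triangle_sub[of "gf i (x k $ i)" "gf i xs"] by linarith
  qed
  also have "\<dots> = (\<Sum>i\<in>UNIV. norm (gf i xs)) + mr * Lf * (cons_err k + opt_err k + norm (gs xs) / \<mu>f)"
    by (simp add: sum.distrib mr mult.assoc)
  finally show ?thesis .
qed

definition alpha :: "nat \<Rightarrow> real" where "alpha k = (1 / mr) * (\<Sum>i\<in>UNIV. u $ i * \<gamma> k i * v $ i)"

lemma u_le_mr: "u $ j \<le> mr"
  using member_le_sum[of j UNIV "\<lambda>i. u $ i"] u_nonneg u_sum by simp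

lemma v_le_mr: "v $ j \<le> mr"
  using member_le_sum[of j UNIV "\<lambda>i. v $ i"] v_nonneg v_sum by simp

lemma alpha_bounds: "\<theta> * \<gamma>hk k \<le> alpha k" "alpha k \<le> mr * \<gamma>hk k"
proof -
  show "\<theta> * \<gamma>hk k \<le> alpha k" using alpha unfolding alpha_def by blast
  have "(\<Sum>i\<in>UNIV. u $ i * \<gamma> k i * v $ i) \<le> (\<Sum>i\<in>UNIV. u $ i * (\<gamma>hk k * mr))"
  proof (rule sum_mono)
    fix i
    have "\<gamma> k i * v $ i \<le> \<gamma>hk k * mr"
      using gam_le gam_nonneg v_le_mr v_nonneg by (meson mult_mono order_trans)
    then show "u $ i * \<gamma> k i * v $ i \<le> u $ i * (\<gamma>hk k * mr)"
      using u_nonneg by (simp add: mult.assoc mult_left_mono)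
  qed
  also have "\<dots> = mr * (mr * \<gamma>hk k)"
    by (simp add: sum_distrib_right[symmetric] u_sum)
  finally show "alpha k \<le> mr * \<gamma>hk k"
    using mr_pos unfolding alpha_def by (simp add: field_simps)
qed

lemma xbar_Suc: "xbar (Suc k) = xbar k - (1 / mr) *\<^sub>R (\<Sum>j\<in>UNIV. (u $ j * \<gamma> k j) *\<^sub>R y k $ j)"
proof -
  have "JR ** x (Suc k) = JR ** x k - JR ** scaled_y k"
    by (simp add: x_Suc matrix_mul_assoc JR_mult_R matrix_mult_diff_right)
  then have "(JR ** x (Suc k)) $ undefined = (JR ** x k) $ undefined - (JR ** scaled_y k) $ undefined"
    by simp
  then show ?thesis by (simp add: JR_mult xbar_eq scaled_y_def)
qed

lemma xbar_Suc_decomp: "xbar (Suc k) = xbar k - (alpha k / mr) *\<^sub>R reg_op (lamk k) (xbar k)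
    - (alpha k / mr) *\<^sub>R (\<Sum>i\<in>UNIV. Tloc k i (x k $ i) - Tloc k i (xbar k))
    - (1 / mr) *\<^sub>R (\<Sum>j\<in>UNIV. (u $ j * \<gamma> k j) *\<^sub>R ycons k $ j)"
proof -
  have "(\<Sum>j\<in>UNIV. (u $ j * \<gamma> k j) *\<^sub>R y k $ j)
      = (\<Sum>j\<in>UNIV. (u $ j * \<gamma> k j) *\<^sub>R ycons k $ j + (u $ j * \<gamma> k j * v $ j) *\<^sub>R ybar k)"
    by (rule sum.cong) (simp_all add: ycons_def algebra_simps)
  also have "\<dots> = (\<Sum>j\<in>UNIV. (u $ j * \<gamma> k j) *\<^sub>R ycons k $ j) + (mr * alpha k) *\<^sub>R ybar k"
    using mr_pos by (simp add: sum.distrib scaleR_sum_left[symmetric] alpha_def)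
  finally have "(\<Sum>j\<in>UNIV. (u $ j * \<gamma> k j) *\<^sub>R y k $ j)
      = (\<Sum>j\<in>UNIV. (u $ j * \<gamma> k j) *\<^sub>R ycons k $ j) + (mr * alpha k) *\<^sub>R ybar k" .
  moreover have "ybar k = (1 / mr) *\<^sub>R (reg_op (lamk k) (xbar k)
      + (\<Sum>i\<in>UNIV. Tloc k i (x k $ i) - Tloc k i (xbar k)))"
    by (simp add: ybar_grad_stack sum_grad_stack)
  ultimately show ?thesis
    using mr_pos by (simp add: xbar_Suc algebra_simps)
qed

lemma xlam_step_le: "norm (xlam k - xlam (Suc k)) \<le> grad_bound / \<mu>f / (real k + \<Gamma>)"
proof -
  have t: "0 < real k + \<Gamma>" using base_ge_1[of k] by linarith
  have "lamk (Suc k) * \<mu>f * norm (xlam (Suc k) - xlam k) \<le> (lamk k - lamk (Suc k)) * grad_bound"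
    using lamk_pos regpar_Suc_le[of k] unfolding lamk_regpar by (intro reg_sol_diff_le) auto
  also have "\<dots> \<le> lamk (Suc k) / (real k + \<Gamma>) * grad_bound"
    using regpar_diff_le[of k] grad_bound_nonneg unfolding lamk_regpar by (rule mult_right_mono)
  finally have "lamk (Suc k) * (\<mu>f * norm (xlam (Suc k) - xlam k))
      \<le> lamk (Suc k) * (grad_bound / (real k + \<Gamma>))"
    by (simp add: mult.assoc)
  then have "\<mu>f * norm (xlam (Suc k) - xlam k) \<le> grad_bound / (real k + \<Gamma>)"
    by (rule mult_left_le_imp_le) (rule lamk_pos)
  then have "norm (xlam (Suc k) - xlam k) \<le> grad_bound / (real k + \<Gamma>) / \<mu>f"
    by (subst pos_le_divide_eq[OF mu_pos]) (simp add: mult.commute)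
  also have "\<dots> = grad_bound / \<mu>f / (real k + \<Gamma>)"
    by (simp add: divide_divide_eq_left mult.commute)
  finally show ?thesis by (simp add: norm_minus_commute)
qed

lemma norm_weighted_ycons_le:
  "norm ((1 / mr) *\<^sub>R (\<Sum>j\<in>UNIV. (u $ j * \<gamma> k j) *\<^sub>R ycons k $ j)) \<le> \<gamma>hk k * (mr * track_err k)"
proof -
  have "norm (\<Sum>j\<in>UNIV. (u $ j * \<gamma> k j) *\<^sub>R ycons k $ j) \<le> (\<Sum>j\<in>(UNIV::'m set). mr * \<gamma>hk k * track_err k)"
  proof (rule order_trans[OF norm_sum sum_mono])
    fix j
    have "u $ j * \<gamma> k j \<le> mr * \<gamma>hk k"
      using u_le_mr gam_le u_nonneg gam_nonneg by (meson mult_mono order_trans mr_pos less_imp_le)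
    then show "norm ((u $ j * \<gamma> k j) *\<^sub>R ycons k $ j) \<le> mr * \<gamma>hk k * track_err k"
      using norm_ycons_row_le[of k j] u_nonneg gam_nonneg mr_pos \<gamma>hk_nonneg[of k]
      by (simp add: mult_mono)
  qed
  then show ?thesis using mr_pos by (simp add: mr field_simps)
qed

lemma xbar_forward_step_le:
  assumes \<eta>: "0 \<le> \<eta>" "\<eta> \<le> \<gamma>hk k"
    and h1: "\<gamma>hk k * (mr * Lloc)\<^sup>2 \<le> lamk k * \<mu>f" and h2: "\<gamma>hk k * lamk k * \<mu>f \<le> 1"
  shows "norm (xbar k - \<eta> *\<^sub>R reg_op (lamk k) (xbar k) - xlam k) \<le> (1 - \<eta> * (lamk k * \<mu>f) / 2) * opt_err k"
  unfolding opt_err_def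
proof (rule forward_step_contraction)
  show "lamk k * \<mu>f * (norm (xbar k - xlam k))\<^sup>2
      \<le> (reg_op (lamk k) (xbar k) - reg_op (lamk k) (xlam k)) \<bullet> (xbar k - xlam k)"
    using reg_op_strongly_monotone lamk_pos[of k] by simp
  show "norm (reg_op (lamk k) (xbar k) - reg_op (lamk k) (xlam k)) \<le> mr * Lloc * norm (xbar k - xlam k)"
    using norm_reg_op_xbar_le reg_op_reg_sol[OF lamk_pos] by (simp add: opt_err_def)
  show "reg_op (lamk k) (xlam k) = 0" by (rule reg_op_reg_sol[OF lamk_pos])
  show "\<eta> * (mr * Lloc)\<^sup>2 \<le> lamk k * \<mu>f"
    using mult_right_mono[OF \<eta>(2), of "(mr * Lloc)\<^sup>2"] h1 by simp
  have "\<eta> * (lamk k * \<mu>f) \<le> \<gamma>hk k * (lamk k * \<mu>f)"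
    using \<eta>(2) lamk_pos[of k] mu_pos by (intro mult_right_mono) auto
  then show "\<eta> * (lamk k * \<mu>f) \<le> 1" using h2 by (simp add: mult.assoc)
qed (rule \<eta>(1))

lemma opt_err_Suc_le:
  assumes h1: "\<gamma>hk k * (mr * Lloc)\<^sup>2 \<le> lamk k * \<mu>f" and h2: "\<gamma>hk k * lamk k * \<mu>f \<le> 1"
  shows "opt_err (Suc k) \<le> (1 - \<theta> * \<mu>f / (2 * mr) * \<gamma>hk k * lamk k) * opt_err k
    + \<gamma>hk k * (mr * Lloc * cons_err k + mr * track_err k) + grad_bound / \<mu>f / (real k + \<Gamma>)"
proof -
  define \<eta> where "\<eta> = alpha k / mr"
  have \<eta>: "\<theta> * \<gamma>hk k / mr \<le> \<eta>" "\<eta> \<le> \<gamma>hk k"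
    using alpha_bounds[of k] mr_pos unfolding \<eta>_def by (auto simp: field_simps)
  have \<eta>0: "0 \<le> \<eta>"
    using \<eta>(1) theta_pos \<gamma>hk_nonneg[of k] mr_pos by (smt (verit) divide_nonneg_pos mult_nonneg_nonneg)
  have rate: "1 - \<eta> * (lamk k * \<mu>f) / 2 \<le> 1 - \<theta> * \<mu>f / (2 * mr) * \<gamma>hk k * lamk k"
    using mult_right_mono[OF \<eta>(1), of "lamk k * \<mu>f"] lamk_pos[of k] mu_pos
    by (simp add: field_simps)
  have Tloc_term: "norm (\<eta> *\<^sub>R (\<Sum>i\<in>UNIV. Tloc k i (x k $ i) - Tloc k i (xbar k)))
      \<le> \<gamma>hk k * (mr * Lloc * cons_err k)"
    using \<eta> \<eta>0 norm_sum_Tloc_diff_le[of k] mr_pos Lloc_nonneg cons_err_nonneg[of k]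
    by (simp add: mult_mono)
  have "xbar (Suc k) - xlam (Suc k) = (xbar k - \<eta> *\<^sub>R reg_op (lamk k) (xbar k) - xlam k)
      - \<eta> *\<^sub>R (\<Sum>i\<in>UNIV. Tloc k i (x k $ i) - Tloc k i (xbar k))
      - (1 / mr) *\<^sub>R (\<Sum>j\<in>UNIV. (u $ j * \<gamma> k j) *\<^sub>R ycons k $ j) + (xlam k - xlam (Suc k))"
    unfolding xbar_Suc_decomp \<eta>_def by (simp add: algebra_simps)
  then have "opt_err (Suc k) \<le> norm (xbar k - \<eta> *\<^sub>R reg_op (lamk k) (xbar k) - xlam k)
      + norm (\<eta> *\<^sub>R (\<Sum>i\<in>UNIV. Tloc k i (x k $ i) - Tloc k i (xbar k)))
      + norm ((1 / mr) *\<^sub>R (\<Sum>j\<in>UNIV. (u $ j * \<gamma> k j) *\<^sub>R ycons k $ j)) + norm (xlam k - xlam (Suc k))"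
    unfolding opt_err_def by (simp only: norm_diff_diff_add_le)
  also have "\<dots> \<le> (1 - \<theta> * \<mu>f / (2 * mr) * \<gamma>hk k * lamk k) * opt_err k
      + \<gamma>hk k * (mr * Lloc * cons_err k) + \<gamma>hk k * (mr * track_err k) + grad_bound / \<mu>f / (real k + \<Gamma>)"
    using xbar_forward_step_le[OF \<eta>0 \<eta>(2) h1 h2] mult_right_mono[OF rate opt_err_nonneg[of k]]
      Tloc_term norm_weighted_ycons_le[of k] xlam_step_le[of k]
    by linarith
  finally show ?thesis by (simp add: algebra_simps)
qed

lemma norm_y_le_errors: "norm (y k) \<le> (1 + norm v * Lloc) * (track_err k + opt_err k + cons_err k)"
  using norm_y_le[of k]
    add_mult_le_one_plus_mult[of "norm v * Lloc" "track_err k" "opt_err k + cons_err k"]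
    Lloc_nonneg track_err_nonneg[of k] opt_err_nonneg[of k] cons_err_nonneg[of k]
  by (simp add: add.assoc)

lemma cons_err_recursion:
  "\<exists>A>0. \<forall>k. cons_err (Suc k) \<le> \<sigma>R * cons_err k + A * \<gamma>hk k * (track_err k + opt_err k + cons_err k)"
proof (intro exI conjI allI)
  define A where "A = \<delta>R2 * (1 + norm v * Lloc) + 1"
  have "0 \<le> \<delta>R2 * (1 + norm v * Lloc)" using \<delta>R2_nonneg Lloc_nonneg by simp
  then show "0 < A" unfolding A_def by linarith
  fix k
  have "\<delta>R2 * \<gamma>hk k * norm (y k) \<le> \<delta>R2 * \<gamma>hk k * ((1 + norm v * Lloc) * (track_err k + opt_err k + cons_err k))"
    using \<delta>R2_nonneg \<gamma>hk_nonneg norm_y_le_errors by (intro mult_left_mono) auto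
  also have "\<dots> = \<delta>R2 * (1 + norm v * Lloc) * (\<gamma>hk k * (track_err k + opt_err k + cons_err k))"
    by (simp only: mult_ac)
  also have "\<dots> \<le> A * (\<gamma>hk k * (track_err k + opt_err k + cons_err k))"
    unfolding A_def using \<gamma>hk_nonneg[of k] track_err_nonneg[of k] opt_err_nonneg[of k] cons_err_nonneg[of k]
    by (intro mult_right_mono) auto
  finally show "cons_err (Suc k) \<le> \<sigma>R * cons_err k + A * \<gamma>hk k * (track_err k + opt_err k + cons_err k)"
    using cons_err_Suc_le[of k] by linarith
qed

lemma track_err_recursion:
  "\<exists>A>0. \<forall>k. track_err (Suc k) \<le> \<sigma>C * track_err k
      + A * (cons_err k + \<gamma>hk k * (track_err k + opt_err k + cons_err k))
      + A * (lamk k - lamk (Suc k)) * (1 + opt_err k + cons_err k)"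
proof -
  define M\<^sub>1 where "M\<^sub>1 = c0 * mr * Lloc * op_norm NR (R - mat 1)"
  define M\<^sub>2 where "M\<^sub>2 = c0 * mr * Lloc * op_norm NR R * \<delta>R2 * (1 + norm v * Lloc)"
  define G\<^sub>1 B\<^sub>z where "G\<^sub>1 = (\<Sum>i\<in>UNIV. norm (gf i xs))" and "B\<^sub>z = norm (gs xs) / \<mu>f"
  define M\<^sub>3 where "M\<^sub>3 = c0 * (G\<^sub>1 + mr * Lf * B\<^sub>z)"
  define M\<^sub>4 where "M\<^sub>4 = c0 * mr * Lf"
  have M: "0 \<le> M\<^sub>1" "0 \<le> M\<^sub>2" "0 \<le> M\<^sub>3" "0 \<le> M\<^sub>4"
    unfolding M\<^sub>1_def M\<^sub>2_def M\<^sub>3_def M\<^sub>4_def G\<^sub>1_def B\<^sub>z_def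
    using c0_nonneg mr_pos Lloc_nonneg \<delta>R2_nonneg Lf_nonneg mu_pos
      op_norm_nonneg[OF NR_bounds, of "R - mat 1"] op_norm_nonneg[OF NR_bounds, of R]
    by (auto intro!: mult_nonneg_nonneg add_nonneg_nonneg sum_nonneg)
  define A where "A = M\<^sub>1 + M\<^sub>2 + M\<^sub>3 + M\<^sub>4 + 1"
  have "0 < A" unfolding A_def using M by simp
  moreover have "track_err (Suc k) \<le> \<sigma>C * track_err k
      + A * (cons_err k + \<gamma>hk k * (track_err k + opt_err k + cons_err k))
      + A * (lamk k - lamk (Suc k)) * (1 + opt_err k + cons_err k)" for k
  proof -
    define E P Q dl where "E = opt_err k" and "P = cons_err k" and "Q = track_err k"
      and "dl = lamk k - lamk (Suc k)"
    have nonneg: "0 \<le> E" "0 \<le> P" "0 \<le> Q" "0 \<le> dl" "0 \<le> \<gamma>hk k"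
      using opt_err_nonneg cons_err_nonneg track_err_nonneg regpar_Suc_le[of k] \<gamma>hk_nonneg
      unfolding E_def P_def Q_def dl_def lamk_regpar by auto
    have "op_norm NR R * \<delta>R2 * (\<gamma>hk k * norm (y k))
        \<le> op_norm NR R * \<delta>R2 * (\<gamma>hk k * ((1 + norm v * Lloc) * (Q + E + P)))"
      using norm_y_le_errors[of k] \<delta>R2_nonneg nonneg(5) op_norm_nonneg[OF NR_bounds, of R]
      unfolding E_def P_def Q_def by (intro mult_left_mono) auto
    then have "norm (x (Suc k) - x k) \<le> op_norm NR (R - mat 1) * P
        + op_norm NR R * \<delta>R2 * (\<gamma>hk k * ((1 + norm v * Lloc) * (Q + E + P)))"
      using norm_x_Suc_diff_le[of k] unfolding P_def by linarith
    then have "c0 * (mr * Lloc) * norm (x (Suc k) - x k) \<le> c0 * (mr * Lloc) * (op_norm NR (R - mat 1) * P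
        + op_norm NR R * \<delta>R2 * (\<gamma>hk k * ((1 + norm v * Lloc) * (Q + E + P))))"
      using c0_nonneg mr_pos Lloc_nonneg by (intro mult_left_mono) auto
    then have "c0 * (mr * Lloc * norm (x (Suc k) - x k)) \<le> M\<^sub>1 * P + M\<^sub>2 * (\<gamma>hk k * (Q + E + P))"
      unfolding M\<^sub>1_def M\<^sub>2_def by (simp add: algebra_simps)
    moreover have "c0 * (dl * (\<Sum>i\<in>UNIV. norm (gf i (x k $ i)))) \<le> dl * (M\<^sub>3 + M\<^sub>4 * (P + E))"
    proof -
      have "c0 * dl * (\<Sum>i\<in>UNIV. norm (gf i (x k $ i))) \<le> c0 * dl * (G\<^sub>1 + mr * Lf * (P + E + B\<^sub>z))"
        using sum_norm_gf_le[of k] c0_nonneg nonneg(4) unfolding G\<^sub>1_def B\<^sub>z_def P_def E_def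
        by (intro mult_left_mono) auto
      also have "\<dots> = dl * (M\<^sub>3 + M\<^sub>4 * (P + E))"
        unfolding M\<^sub>3_def M\<^sub>4_def by (simp add: algebra_simps)
      finally show ?thesis by (simp add: mult.assoc)
    qed
    moreover have "norm (grad_stack (Suc k) - grad_stack k)
        \<le> mr * Lloc * norm (x (Suc k) - x k) + dl * (\<Sum>i\<in>UNIV. norm (gf i (x k $ i)))"
      using norm_grad_stack_diff_le[of k] unfolding dl_def .
    then have "c0 * norm (grad_stack (Suc k) - grad_stack k)
        \<le> c0 * (mr * Lloc * norm (x (Suc k) - x k)) + c0 * (dl * (\<Sum>i\<in>UNIV. norm (gf i (x k $ i))))"
      using mult_left_mono c0_nonneg by (simp only: distrib_left[symmetric])
    ultimately have "c0 * norm (grad_stack (Suc k) - grad_stack k)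
        \<le> M\<^sub>1 * P + M\<^sub>2 * (\<gamma>hk k * (Q + E + P)) + dl * (M\<^sub>3 + M\<^sub>4 * (P + E))"
      by linarith
    also have "\<dots> \<le> A * (P + \<gamma>hk k * (Q + E + P)) + A * dl * (1 + E + P)"
    proof -
      have "M\<^sub>1 * P \<le> A * P" "M\<^sub>2 * (\<gamma>hk k * (Q + E + P)) \<le> A * (\<gamma>hk k * (Q + E + P))"
        unfolding A_def using M nonneg by (intro mult_right_mono; simp)+
      moreover have "dl * (M\<^sub>3 + M\<^sub>4 * (P + E)) \<le> dl * (A * (1 + E + P))"
      proof (rule mult_left_mono[OF _ nonneg(4)])
        have "M\<^sub>4 * (P + E) \<le> A * (P + E)"
          unfolding A_def using M nonneg by (intro mult_right_mono) auto
        moreover have "M\<^sub>3 \<le> A" unfolding A_def using M by simp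
        ultimately show "M\<^sub>3 + M\<^sub>4 * (P + E) \<le> A * (1 + E + P)"
          by (simp add: distrib_left)
      qed
      ultimately show ?thesis by (simp add: algebra_simps)
    qed
    finally show ?thesis
      using track_err_Suc_le[of k] unfolding E_def P_def Q_def dl_def by linarith
  qed
  ultimately show ?thesis by blast
qed

lemma opt_err_recursion:
  "\<exists>A>0. eventually (\<lambda>k. opt_err (Suc k) \<le> (1 - \<theta> * \<mu>f / (2 * mr) * \<gamma>hk k * lamk k) * opt_err k
      + A * \<gamma>hk k * (cons_err k + track_err k) + A / (real k + \<Gamma>)) sequentially"
proof (intro exI conjI)
  define A where "A = mr * Lloc + mr + grad_bound / \<mu>f + 1"
  have "0 \<le> mr * Lloc" "0 \<le> grad_bound / \<mu>f" using mr_pos Lloc_nonneg grad_bound_nonneg mu_pos by simp_all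
  then show "0 < A" unfolding A_def using mr_pos by linarith
  define D where "D = (mr * Lloc)\<^sup>2 + 1"
  have D: "0 < D" unfolding D_def by (smt (verit) zero_le_power2)
  have "eventually (\<lambda>k. stepsize k \<le> \<mu>f / D * regpar k) sequentially"
    using mu_pos D by (intro eventually_stepsize_le_regpar) simp
  moreover have "eventually (\<lambda>k. stepsize k \<le> 1 / (lam * \<mu>f)) sequentially"
    using mu_pos par by (intro eventually_stepsize_le) simp
  ultimately show "eventually (\<lambda>k. opt_err (Suc k) \<le> (1 - \<theta> * \<mu>f / (2 * mr) * \<gamma>hk k * lamk k) * opt_err k
      + A * \<gamma>hk k * (cons_err k + track_err k) + A / (real k + \<Gamma>)) sequentially"
  proof eventually_elim
    case (elim k)
    have h1: "\<gamma>hk k * (mr * Lloc)\<^sup>2 \<le> lamk k * \<mu>f"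
    proof -
      have "\<gamma>hk k * (mr * Lloc)\<^sup>2 \<le> \<gamma>hk k * D"
        using \<gamma>hk_nonneg unfolding D_def by (simp add: mult_left_mono)
      also have "\<dots> \<le> \<mu>f / D * lamk k * D"
        using elim(1) D unfolding \<gamma>hk_stepsize lamk_regpar by (intro mult_right_mono) auto
      also have "\<dots> = lamk k * \<mu>f" using D by simp
      finally show ?thesis .
    qed
    have h2: "\<gamma>hk k * lamk k * \<mu>f \<le> 1"
    proof -
      have "\<gamma>hk k * lamk k \<le> 1 / (lam * \<mu>f) * lam"
        using elim(2) lamk_le[of k] lamk_pos[of k] \<gamma>hk_nonneg[of k] mu_pos par
        unfolding \<gamma>hk_stepsize lamk_regpar by (intro mult_mono) auto
      then have "\<gamma>hk k * lamk k * \<mu>f \<le> 1 / (lam * \<mu>f) * lam * \<mu>f"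
        using mu_pos by (intro mult_right_mono) auto
      then show ?thesis using par mu_pos by simp
    qed
    have "mr * Lloc * cons_err k \<le> A * cons_err k" "mr * track_err k \<le> A * track_err k"
      unfolding A_def using cons_err_nonneg[of k] track_err_nonneg[of k] grad_bound_nonneg mu_pos
        mr_pos Lloc_nonneg by (intro mult_right_mono; simp)+
    then have "mr * Lloc * cons_err k + mr * track_err k \<le> A * (cons_err k + track_err k)"
      by (simp add: distrib_left)
    then have "\<gamma>hk k * (mr * Lloc * cons_err k + mr * track_err k) \<le> \<gamma>hk k * (A * (cons_err k + track_err k))"
      using \<gamma>hk_nonneg[of k] by (rule mult_left_mono)
    then have "\<gamma>hk k * (mr * Lloc * cons_err k + mr * track_err k) \<le> A * \<gamma>hk k * (cons_err k + track_err k)"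
      by (simp only: mult_ac)
    moreover have "grad_bound / \<mu>f / (real k + \<Gamma>) \<le> A / (real k + \<Gamma>)"
      unfolding A_def using base_ge_1[of k] mr_pos Lloc_nonneg by (intro divide_right_mono) auto
    ultimately show ?case using opt_err_Suc_le[OF h1 h2] by linarith
  qed
qed

lemma error_decay: "\<exists>K. \<forall>k. opt_err k \<le> K * decay k \<and> cons_err k \<le> K * decay k \<and> track_err k \<le> K * decay k"
proof -
  obtain A\<^sub>1 where A\<^sub>1: "0 < A\<^sub>1" and rec\<^sub>1: "eventually (\<lambda>k. opt_err (Suc k)
      \<le> (1 - \<theta> * \<mu>f / (2 * mr) * \<gamma>hk k * lamk k) * opt_err k
      + A\<^sub>1 * \<gamma>hk k * (cons_err k + track_err k) + A\<^sub>1 / (real k + \<Gamma>)) sequentially"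
    using opt_err_recursion by blast
  obtain A\<^sub>2 where A\<^sub>2: "0 < A\<^sub>2" and rec\<^sub>2: "\<And>k. cons_err (Suc k)
      \<le> \<sigma>R * cons_err k + A\<^sub>2 * \<gamma>hk k * (track_err k + opt_err k + cons_err k)"
    using cons_err_recursion by blast
  obtain A\<^sub>3 where A\<^sub>3: "0 < A\<^sub>3" and rec\<^sub>3: "\<And>k. track_err (Suc k) \<le> \<sigma>C * track_err k
      + A\<^sub>3 * (cons_err k + \<gamma>hk k * (track_err k + opt_err k + cons_err k))
      + A\<^sub>3 * (lamk k - lamk (Suc k)) * (1 + opt_err k + cons_err k)"
    using track_err_recursion by blast
  define A where "A = A\<^sub>1 + A\<^sub>2 + A\<^sub>3"
  have A: "0 < A" "A\<^sub>1 \<le> A" "A\<^sub>2 \<le> A" "A\<^sub>3 \<le> A" using A\<^sub>1 A\<^sub>2 A\<^sub>3 unfolding A_def by auto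
  show ?thesis
  proof (rule tracking_system_decay[OF opt_err_nonneg cons_err_nonneg track_err_nonneg A(1)])
    show "0 < \<theta> * \<mu>f / (2 * mr)" using theta_pos mu_pos mr_pos by simp
    show "0 \<le> \<sigma>R" "\<sigma>R < 1" "0 \<le> \<sigma>C" "\<sigma>C < 1" using \<sigma>R_nonneg sigR \<sigma>C_nonneg sigC by auto
    show "eventually (\<lambda>k.
        opt_err (Suc k) \<le> (1 - \<theta> * \<mu>f / (2 * mr) * stepsize k * regpar k) * opt_err k
          + A * stepsize k * (cons_err k + track_err k) + A / (real k + \<Gamma>)
      \<and> cons_err (Suc k) \<le> \<sigma>R * cons_err k + A * stepsize k * (track_err k + opt_err k + cons_err k)
      \<and> track_err (Suc k) \<le> \<sigma>C * track_err k + A * (cons_err k + stepsize k * (track_err k + opt_err k + cons_err k))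
          + A * (regpar k - regpar (Suc k)) * (1 + opt_err k + cons_err k)) sequentially"
      using rec\<^sub>1
    proof eventually_elim
      case (elim k)
      have nonneg: "0 \<le> opt_err k" "0 \<le> cons_err k" "0 \<le> track_err k" "0 \<le> \<gamma>hk k"
        "0 \<le> lamk k - lamk (Suc k)" "0 < real k + \<Gamma>"
        using opt_err_nonneg cons_err_nonneg track_err_nonneg \<gamma>hk_nonneg regpar_Suc_le[of k]
          base_ge_1[of k] unfolding lamk_regpar by auto
      have "A\<^sub>1 * \<gamma>hk k * (cons_err k + track_err k) \<le> A * \<gamma>hk k * (cons_err k + track_err k)"
        "A\<^sub>1 / (real k + \<Gamma>) \<le> A / (real k + \<Gamma>)"
        "A\<^sub>2 * \<gamma>hk k * (track_err k + opt_err k + cons_err k) \<le> A * \<gamma>hk k * (track_err k + opt_err k + cons_err k)"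
        "A\<^sub>3 * (cons_err k + \<gamma>hk k * (track_err k + opt_err k + cons_err k))
           \<le> A * (cons_err k + \<gamma>hk k * (track_err k + opt_err k + cons_err k))"
        "A\<^sub>3 * (lamk k - lamk (Suc k)) * (1 + opt_err k + cons_err k)
           \<le> A * (lamk k - lamk (Suc k)) * (1 + opt_err k + cons_err k)"
        using A nonneg by (intro mult_right_mono divide_right_mono; simp)+
      then show ?case
        using elim rec\<^sub>2[of k] rec\<^sub>3[of k] unfolding \<gamma>hk_stepsize lamk_regpar by linarith
    qed
  qed
qed

lemma xbar_tendsto: "xbar \<longlonglongrightarrow> xs"
proof -
  obtain K where K: "\<And>k. opt_err k \<le> K * decay k" using error_decay by blast
  have "(\<lambda>k. K * decay k) \<longlonglongrightarrow> K * 0"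
    using decay_tendsto_zero by (rule tendsto_mult_left)
  moreover have "\<forall>k. norm (xbar k - xlam k) \<le> K * decay k"
    using K unfolding opt_err_def by blast
  ultimately have "(\<lambda>k. xbar k - xlam k) \<longlonglongrightarrow> 0"
    using Lim_null_comparison[of "\<lambda>k. xbar k - xlam k" "\<lambda>k. K * decay k" sequentially]
    by (simp add: always_eventually)
  moreover have "xlam \<longlonglongrightarrow> xs"
    unfolding lamk_regpar by (rule reg_sol_tendsto[OF regpar_pos regpar_tendsto_zero])
  ultimately have "(\<lambda>k. (xbar k - xlam k) + xlam k) \<longlonglongrightarrow> 0 + xs"
    by (rule tendsto_add)
  then show ?thesis by simp
qed

lemma decay_Suc_le: "1 \<le> k \<Longrightarrow> decay (k + 1) \<le> 1 / (real k + \<Gamma> - 1) powr (1 - a - b)"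
  unfolding decay_def using par by (intro divide_left_mono powr_mono2) auto

lemma consensus_tracking_rate: "\<exists>K. \<forall>B\<ge>K.
    (\<forall>k\<ge>1. ext_norm NR (x (k + 1) - (\<chi> i. xbar (k + 1))) \<le> B / (real k + \<Gamma> - 1) powr (1 - a - b))
  \<and> (\<forall>k\<ge>1. ext_norm NC (y (k + 1) - (\<chi> i. v $ i *\<^sub>R ybar (k + 1))) \<le> B / (real k + \<Gamma> - 1) powr (1 - a - b))"
proof -
  obtain K where K: "\<And>k. cons_err k \<le> K * decay k" "\<And>k. track_err k \<le> K * decay k"
    using error_decay by blast
  have "0 \<le> K"
    using K(1)[of 0] cons_err_nonneg[of 0] mult_neg_pos[of K "decay 0"] decay_pos[of 0] by linarith
  have bound: "E \<le> B / (real k + \<Gamma> - 1) powr (1 - a - b)"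
    if "E \<le> K * decay (k + 1)" "K \<le> B" "1 \<le> k" for E B k
  proof -
    have "K * decay (k + 1) \<le> B * (1 / (real k + \<Gamma> - 1) powr (1 - a - b))"
      using that \<open>0 \<le> K\<close> decay_pos[of "k + 1"] decay_Suc_le[OF that(3)] by (intro mult_mono) auto
    then show ?thesis using that(1) by simp
  qed
  show ?thesis
    using bound K unfolding cons_err_def track_err_def xcons_def ycons_def by blast
qed

end

lemma positive_scale_dominates:
  fixes \<mu> D K :: real
  assumes \<mu>: "0 < \<mu>" and D: "0 < D"
  obtains M where "0 < M" and "\<And>Y. K \<le> 4 * (max 1 Y * (sqrt 3 * M / \<mu>)) / D"
proof
  define M where "M = (\<bar>K\<bar> + 1) * \<mu> * D"
  show M: "0 < M" unfolding M_def using \<mu> D by (simp add: add_pos_nonneg)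
  fix Y
  have "0 \<le> M / \<mu>" using M \<mu> by simp
  then have "1 * (1 * (M / \<mu>)) \<le> max 1 Y * (sqrt 3 * (M / \<mu>))"
    by (intro mult_mono) auto
  then have "4 * (M / \<mu>) \<le> 4 * (max 1 Y * (sqrt 3 * M / \<mu>))" by simp
  then have le: "4 * (M / \<mu>) / D \<le> 4 * (max 1 Y * (sqrt 3 * M / \<mu>)) / D"
    by (rule divide_right_mono) (use D in simp)
  have "K \<le> 4 * (\<bar>K\<bar> + 1)" using abs_ge_self[of K] abs_ge_zero[of K] by (simp add: distrib_left)
  also have "\<dots> = 4 * (M / \<mu>) / D" unfolding M_def using D \<mu> by simp
  finally show "K \<le> 4 * (max 1 Y * (sqrt 3 * M / \<mu>)) / D" using le by (rule order_trans)
qed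

theorem theorem1:
  fixes f :: "'m::finite \<Rightarrow> real^'n::finite \<Rightarrow> real"
    and gf :: "'m \<Rightarrow> real^'n \<Rightarrow> real^'n"
    and Fi :: "'m \<Rightarrow> real^'n \<Rightarrow> real^'n"
    and \<mu>f Lf LF :: real
    and xs :: "real^'n"
    and R C :: "real^'m^'m"
    and u v :: "real^'m"
    and NR NC :: "real^'m \<Rightarrow> real"
    and \<delta>RC \<delta>C2 :: real
    and \<gamma> :: "nat \<Rightarrow> 'm \<Rightarrow> real"
    and \<gamma>h lam \<Gamma> a b \<tau> \<theta> :: real
    and x y :: "nat \<Rightarrow> real^'n^'m"
    and mr \<sigma>R \<sigma>C c0 L0 \<Lambda>0 \<theta>bar \<Gamma>2 c1 c2 c3 c4 \<Gamma>3 :: real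
    and Fs gs :: "real^'n \<Rightarrow> real^'n"
    and lamk \<gamma>hk :: "nat \<Rightarrow> real"
    and xbar ybar :: "nat \<Rightarrow> real^'n"
  assumes "mr = real CARD('m)"
    and "Fs = (\<lambda>z. \<Sum>i\<in>UNIV. Fi i z)"
    and "gs = (\<lambda>z. \<Sum>i\<in>UNIV. gf i z)"
    and "lamk = (\<lambda>k::nat. lam / (real k + \<Gamma>) powr b)"
    and "\<gamma>hk = (\<lambda>k::nat. \<gamma>h / (real k + \<Gamma>) powr a)"
    and "xbar = (\<lambda>k. (1 / mr) *\<^sub>R (\<Sum>i\<in>UNIV. u $ i *\<^sub>R x k $ i))"
    and "ybar = (\<lambda>k. (1 / mr) *\<^sub>R (\<Sum>i\<in>UNIV. y k $ i))"
  (* smoothness, convexity, monotonicity, Lipschitz continuity *)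
  assumes diff: "\<forall>i z. (f i has_derivative (\<lambda>h. gf i z \<bullet> h)) (at z)"
    and contgrad: "\<forall>i. continuous_on UNIV (gf i)"
    and mu_pos: "\<mu>f > 0"
    and sconv: "strongly_convex \<mu>f (\<lambda>z. \<Sum>i\<in>UNIV. f i z)"
    and Lf_pos: "Lf > 0" and lip_f: "\<forall>i. lipschitz_on Lf UNIV (gf i)"
    and mono: "monotone_op Fs"
    and LF_pos: "LF > 0" and lip_F: "\<forall>i. lipschitz_on LF UNIV (Fi i)"
    and sol_ne: "SOL Fs \<noteq> {}"
    and xs_sol: "xs \<in> SOL Fs"
    and xs_min: "\<forall>z\<in>SOL Fs. (\<Sum>i\<in>UNIV. f i xs) \<le> (\<Sum>i\<in>UNIV. f i z)"
  (* communication matrices *)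
    and R_nonneg: "\<forall>i j. R $ i $ j \<ge> 0" and R_diag: "\<forall>i. R $ i $ i > 0"
    and R_row: "R *v (\<chi> i. 1) = (\<chi> i. 1)"
    and C_nonneg: "\<forall>i j. C $ i $ j \<ge> 0" and C_diag: "\<forall>i. C $ i $ i > 0"
    and C_col: "(\<chi> i. 1) v* C = (\<chi> i. 1)"
    and roots: "tree_roots R \<inter> tree_roots (transpose C) \<noteq> {}"
    and u_nonneg: "\<forall>i. u $ i \<ge> 0" and u_left: "u v* R = u" and u_sum: "(\<Sum>i\<in>UNIV. u $ i) = mr"
    and v_nonneg: "\<forall>i. v $ i \<ge> 0" and v_right: "C *v v = v" and v_sum: "(\<Sum>i\<in>UNIV. v $ i) = mr"
  (* algorithm *)
    and y0: "\<forall>i. y 0 $ i = Fi i (x 0 $ i) + lamk 0 *\<^sub>R gf i (x 0 $ i)"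
    and x_step: "\<forall>k i. x (Suc k) $ i = (\<Sum>j\<in>UNIV. R $ i $ j *\<^sub>R (x k $ j - \<gamma> k j *\<^sub>R y k $ j))"
    and y_step: "\<forall>k i. y (Suc k) $ i = (\<Sum>j\<in>UNIV. C $ i $ j *\<^sub>R y k $ j)
                   + Fi i (x (Suc k) $ i) + lamk (Suc k) *\<^sub>R gf i (x (Suc k) $ i)
                   - Fi i (x k $ i) - lamk k *\<^sub>R gf i (x k $ i)"
  (* parameters *)
    and gam_nonneg: "\<forall>k i. \<gamma> k i \<ge> 0"
    and gam_max: "\<forall>k. Max (range (\<gamma> k)) = \<gamma>hk k"
    and par_pos: "\<gamma>h > 0" "lam > 0" "\<Gamma> > 0" "a > 0" "b > 0"
    and ab: "a > b" "a + b < 1" "2 * a + 3 * b < 2"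
    and Gam1: "\<Gamma> \<ge> 1"
    and tau_pos: "\<tau> > 0"
    and Gam_tau: "\<Gamma> \<ge> (4 / (\<gamma>h * lam * \<mu>f * \<tau>)) powr (1 / (1 - a - b))"
    and theta_pos: "\<theta> > 0"
    and alpha: "\<forall>k. (1 / mr) * (\<Sum>i\<in>UNIV. u $ i * \<gamma> k i * v $ i) \<ge> \<theta> * \<gamma>hk k"
  (* norms *)
    and NR_norm: "is_vnorm NR" and NC_norm: "is_vnorm NC"
  assumes "\<sigma>R = op_norm NR (R - (\<chi> i j. u $ j / mr))"
    and "\<sigma>C = op_norm NC (C - (\<chi> i j. v $ i / mr))"
  assumes sigR: "\<sigma>R < 1" and sigC: "\<sigma>C < 1"
    and NR_ge: "\<forall>w. norm w \<le> NR w" and NC_ge: "\<forall>w. norm w \<le> NC w"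
    and dRC: "\<delta>RC > 0" "\<forall>w. NR w \<le> \<delta>RC * NC w"
    and dC2: "\<delta>C2 > 0" "\<forall>w. NC w \<le> \<delta>C2 * norm w"
  (* constants *)
  assumes "c0 = \<delta>C2 * op_norm NC (mat 1 - (\<chi> i j. v $ i / mr))"
    and "L0 = LF + lamk 0 * Lf"
    and "\<Lambda>0 = \<bar>1 - lamk 1 / lamk 0\<bar>"
    and "\<theta>bar = (u \<bullet> v) / mr"
    and "\<Gamma>2 = max ((L0 * \<gamma>h * (u \<bullet> v) / mr) powr (1 / a))
                    ((\<gamma>h * (u \<bullet> v) * L0\<^sup>2 / (mr * \<mu>f * lam)) powr (1 / (a - b)))"
    and "c1 = (0.5 * \<mu>f * \<theta>bar * lam) * \<sigma>R * \<delta>RC * c0 * L0 * spec_norm R * norm v * (L0 / sqrt mr)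
             + (\<theta>bar * L0 / sqrt mr) * \<sigma>R * \<delta>RC * c0 * L0 * spec_norm R * norm v * L0
             + (norm u / mr) * \<sigma>R * L0 * NR v * c0 * L0 * spec_norm R * norm v * (L0 / sqrt mr)"
    and "c2 = (0.5 * \<mu>f * \<theta>bar * lam) * \<sigma>R * \<delta>RC * c0 * L0 * (spec_norm (R - mat 1) + 2 * \<Lambda>0)
             + ((1 - \<sigma>C) / 2) * (\<theta>bar * L0 / sqrt mr) * \<sigma>R * L0 * NR v
             + (\<theta>bar * L0 / sqrt mr) * \<sigma>R * \<delta>RC * c0 * L0 * (2 * sqrt mr * \<Lambda>0)
             + (norm u / mr) * \<sigma>R * L0 * NR v * c0 * L0 * (spec_norm (R - mat 1) + 2 * \<Lambda>0)
             + ((1 - \<sigma>R) / 2) * c0 * L0 * spec_norm R * norm v * L0 * (norm u / mr)"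
    and "c3 = (1 / 8) * \<mu>f * \<theta> * (1 - \<sigma>R) * (1 - \<sigma>C)"
    and "c4 = ((1 - \<sigma>R) / 2) * c0 * L0 * sqrt mr * (norm u / mr)"
    and "\<Gamma>3 = Max {\<Gamma>2,
        ((\<mu>f * lam * \<gamma>h * (u \<bullet> v) + 2 * \<gamma>h * NR v * L0) / ((1 - \<sigma>R) * sqrt mr)) powr (1 / a),
        ((\<mu>f * lam * \<gamma>h * (u \<bullet> v) + 2 * \<gamma>h * c0 * L0 * spec_norm R) / (1 - \<sigma>C)) powr (1 / a),
        (0.5 * \<mu>f * lam * \<gamma>h * (u \<bullet> v) / mr) powr (1 / (a + b)),
        (3 * c1 * \<gamma>h\<^sup>2 / (c3 * lam)) powr (1 / (2 * a - b)),
        (3 * c2 * \<gamma>h / (c3 * lam)) powr (1 / (a - b)),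
        (3 * c4 / (c3 * lam)) powr (1 / (1 - b))}"
  (* additional hypotheses of the theorem *)
  assumes tau_def: "\<tau> = \<theta> / 2"
    and Gam3: "\<Gamma> \<ge> \<Gamma>3"
  shows "\<exists>M > 0. \<exists>BF > 0.
    (let \<Theta> = max 1 (max (\<sigma>R * \<gamma>h * L0 * NR v)
                  (c0 * L0 * (\<gamma>h * spec_norm R * norm v * L0 + sqrt mr * \<Lambda>0 + \<mu>f * c0 * BF / M)))
               * (sqrt 3 * M / \<mu>f);
         \<Delta>1 = sqrt ((norm (xbar 1 - reg_sol Fs gs (lamk 0)))\<^sup>2
                    + (ext_norm NR (x 1 - (\<chi> i. xbar 1)))\<^sup>2
                    + (ext_norm NC (y 1 - (\<chi> i. v $ i *\<^sub>R ybar 1)))\<^sup>2);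
         \<B> = max ((\<Gamma> + 1) powr (1 - a - b) * \<Delta>1) (4 * \<Theta> / (\<mu>f * lam * \<gamma>h * \<theta>))
     in (\<forall>k\<ge>1. ext_norm NR (x (k + 1) - (\<chi> i. xbar (k + 1)))
                 \<le> \<B> / (real k + \<Gamma> - 1) powr (1 - a - b))
      \<and> (\<forall>k\<ge>1. ext_norm NC (y (k + 1) - (\<chi> i. v $ i *\<^sub>R ybar (k + 1)))
                 \<le> \<B> / (real k + \<Gamma> - 1) powr (1 - a - b))
      \<and> xbar \<longlonglongrightarrow> xs)"
proof -
  interpret ir_push_pull f gf Fi \<mu>f Lf LF xs R C u v NR NC \<delta>RC \<delta>C2 \<gamma> \<gamma>h lam \<Gamma> a b \<theta> x y
      mr \<sigma>R \<sigma>C Fs gs lamk \<gamma>hk xbar ybar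
    by (unfold_locales; (fact assms)?)
  obtain K where K: "\<forall>B\<ge>K.
      (\<forall>k\<ge>1. ext_norm NR (x (k + 1) - (\<chi> i. xbar (k + 1))) \<le> B / (real k + \<Gamma> - 1) powr (1 - a - b))
    \<and> (\<forall>k\<ge>1. ext_norm NC (y (k + 1) - (\<chi> i. v $ i *\<^sub>R ybar (k + 1))) \<le> B / (real k + \<Gamma> - 1) powr (1 - a - b))"
    using consensus_tracking_rate by blast
  \<comment> \<open>\<open>M\<close> is only constrained to be positive, so it can absorb the rate constant \<open>K\<close>.\<close>
  obtain M where M: "0 < M" and "\<And>Y. K \<le> 4 * (max 1 Y * (sqrt 3 * M / \<mu>f)) / (\<mu>f * lam * \<gamma>h * \<theta>)"
    using positive_scale_dominates[of \<mu>f "\<mu>f * lam * \<gamma>h * \<theta>" K] mu_pos par_pos theta_pos by auto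
  then have "K \<le> max X (4 * (max 1 Y * (sqrt 3 * M / \<mu>f)) / (\<mu>f * lam * \<gamma>h * \<theta>))" for X Y
    by (simp add: le_max_iff_disj)
  then show ?thesis
    unfolding Let_def using M K xbar_tendsto
    by (intro exI[of _ M] conjI exI[of _ "1::real"]) blast+
qed

end
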